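(* A geodesic $\bar\gamma$ on the modular surface $\mathcal M=\mathrm{PSL}(2,\mathbb Z)\backslash\mathbb H$ is closed if and only if it has a lift $\gamma$ to $\mathbb H$ with $(\gamma_\infty,\gamma_{-\infty})\in\mathcal S$ whose endpoints are purely periodic of the form $$\gamma_\infty=\epsilon\,[\![\overline{(a_0,\epsilon_0)\cdots(a_{r-1},\epsilon_{r-1})}]\!],\qquad \gamma_{-\infty}=-\epsilon\,\langle\!\langle\overline{(\epsilon_{r-1}/a_{r-1})\cdots(\epsilon_0/a_0)}\rangle\!\rangle,$$ for some $\epsilon\in\{\pm1\}$, $r\ge1$ and digits $(a_i,\epsilon_i)\in\{(2,-1),(1,+1)\}$ with $(-\epsilon_0)(-\epsilon_1)\cdots(-\epsilon_{r-1})=1$.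
   Context: $\gamma_\infty,\gamma_{-\infty}$ denote the forward and backward endpoints of an oriented geodesic $\gamma$ in $\mathbb H$; $\mathcal S:=\big((1,2)\times(-\infty,1)\big)\cup\big((-2,-1)\times(-1,\infty)\big)$. For digits $(a_i,\epsilon_i)\in\{(2,-1),(1,+1)\}$, $[\![(a_0,\epsilon_0)(a_1,\epsilon_1)\cdots]\!]$ denotes the value of $a_0+\cfrac{\epsilon_0}{a_1+\cfrac{\epsilon_1}{a_2+\cdots}}$, and $\langle\!\langle(f_0/b_0)(f_1/b_1)\cdots\rangle\!\rangle$ denotes the value of $\cfrac{f_0}{b_0+\cfrac{f_1}{b_1+\cdots}}$, a Lehner digit $(a,\epsilon)$ being used as the digit $(\epsilon/a)$. An overline denotes infinite periodic repetition of the block. *)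

theory Defs
  imports "HOL-Analysis.Analysis"
begin

definition moeb :: "real \<times> real \<times> real \<times> real \<Rightarrow> complex \<Rightarrow> complex" where
  "moeb g z = (case g of (a,b,c,d) \<Rightarrow>
      (of_real a * z + of_real b) / (of_real c * z + of_real d))"

text \<open>The modular group, represented by SL(2,Z) (which acts on H as PSL(2,Z)).\<close>
definition SL2Z :: "(int \<times> int \<times> int \<times> int) set" where
  "SL2Z = {(a,b,c,d). a * d - b * c = 1}"

definition of_int_mat :: "int \<times> int \<times> int \<times> int \<Rightarrow> real \<times> real \<times> real \<times> real" where
  "of_int_mat g = (case g of (a,b,c,d) \<Rightarrow> (of_int a, of_int b, of_int c, of_int d))"

definition is_geodesic :: "(real \<Rightarrow> complex) \<Rightarrow> bool" where
  "is_geodesic \<gamma> \<longleftrightarrow> (\<exists>a b c d. a * d - b * c = 1 \<and>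
      (\<forall>t. \<gamma> t = moeb (a,b,c,d) (\<i> * of_real (exp t))))"

definition closed_on_M :: "(real \<Rightarrow> complex) \<Rightarrow> bool" where
  "closed_on_M \<gamma> \<longleftrightarrow> (\<exists>T>0. \<exists>g\<in>SL2Z. \<forall>t. \<gamma> (t + T) = moeb (of_int_mat g) (\<gamma> t))"

definition S_set :: "(real \<times> real) set" where
  "S_set = {(x,y). (1 < x \<and> x < 2 \<and> y < 1) \<or> (-2 < x \<and> x < -1 \<and> -1 < y)}"

fun lconv :: "(nat \<Rightarrow> int \<times> int) \<Rightarrow> nat \<Rightarrow> real" where
  "lconv d 0 = of_int (fst (d 0))"
| "lconv d (Suc n) = of_int (fst (d 0)) + of_int (snd (d 0)) / lconv (\<lambda>i. d (Suc i)) n"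

fun fconv :: "(nat \<Rightarrow> int \<times> int) \<Rightarrow> nat \<Rightarrow> real" where
  "fconv d 0 = of_int (fst (d 0)) / of_int (snd (d 0))"
| "fconv d (Suc n) = of_int (fst (d 0)) / (of_int (snd (d 0)) + fconv (\<lambda>i. d (Suc i)) n)"

end

theory Submission
  imports Defs
begin

text \<open>A lift of a closed geodesic is the axis of a hyperbolic modular transformation \<open>P\<close>:
  \<open>P N = N diag(l, 1/l)\<close> for the matrix \<open>N\<close> of the lift. Conjugating \<open>P\<close> in \<open>SL(2,\<int>)\<close>
  (a descent on \<open>|c|\<close>, then an integer translation) makes its entries nonnegative with
  \<open>a \<le> c\<close>, \<open>b \<le> d\<close>, so that it is a word in the two Farey generators; conjugated by
  \<open>z \<mapsto> z + 1\<close>, this is a word in the digit matrices of \<open>v \<mapsto> a + \<epsilon>/v\<close>, and the endpoints of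
  the correspondingly moved lift satisfy \<open>1 < x < 2\<close>, \<open>y < 1\<close>. These endpoints are the attracting
  fixed points of the finite Lehner map of the word and of its dual, which contract \<open>[1,\<infinity>)\<close> and
  \<open>(-1,\<infinity>)\<close> respectively; hence the purely periodic expansions converge to \<open>x\<close> and \<open>-y\<close>.
  Conversely, the limits of the periodic expansions are fixed points of the word matrix (twisted
  by the sign \<open>\<epsilon>\<close>), which is therefore diagonalised by the lift and translates it.\<close>

section \<open>Matrices and Moebius transformations\<close>

type_synonym 'a mat2 = "'a \<times> 'a \<times> 'a \<times> 'a"

definition mat_mult :: "'a::comm_ring_1 mat2 \<Rightarrow> 'a mat2 \<Rightarrow> 'a mat2" where
  "mat_mult A B = (case A of (a,b,c,d) \<Rightarrow> case B of (e,f,g,h) \<Rightarrow>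
     (a*e + b*g, a*f + b*h, c*e + d*g, c*f + d*h))"

definition mat_det :: "'a::comm_ring_1 mat2 \<Rightarrow> 'a" where
  "mat_det A = (case A of (a,b,c,d) \<Rightarrow> a*d - b*c)"

definition mat_adj :: "'a::comm_ring_1 mat2 \<Rightarrow> 'a mat2" where
  "mat_adj A = (case A of (a,b,c,d) \<Rightarrow> (d,-b,-c,a))"

lemma mat_mult_simp [simp]:
  "mat_mult (a,b,c,d) (e,f,g,h) = (a*e + b*g, a*f + b*h, c*e + d*g, c*f + d*h)"
  by (simp add: mat_mult_def)

lemma mat_det_simp [simp]: "mat_det (a,b,c,d) = a*d - b*c"
  by (simp add: mat_det_def)

lemma mat_adj_simp [simp]: "mat_adj (a,b,c,d) = (d,-b,-c,a)"
  by (simp add: mat_adj_def)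

lemma mat_mult_assoc: "mat_mult (mat_mult A B) C = mat_mult A (mat_mult B C)"
  by (cases A; cases B; cases C) (simp add: algebra_simps)

lemma mat_mult_id [simp]: "mat_mult A (1,0,0,1) = A" "mat_mult (1,0,0,1) A = A"
  by (cases A; simp)+

lemma mat_det_mult: "mat_det (mat_mult A B) = mat_det A * mat_det B"
  by (cases A; cases B) (simp add: algebra_simps)

lemma mat_det_adj [simp]: "mat_det (mat_adj A) = mat_det A"
  by (cases A) (simp add: algebra_simps)

lemma mat_mult_adj: "mat_det A = 1 \<Longrightarrow> mat_mult A (mat_adj A) = (1,0,0,1)"
  by (cases A) (simp add: algebra_simps)

lemma mat_adj_mult: "mat_det A = 1 \<Longrightarrow> mat_mult (mat_adj A) A = (1,0,0,1)"
  by (cases A) (simp add: algebra_simps)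

lemma mat_adj_mult_distrib: "mat_adj (mat_mult A B) = mat_mult (mat_adj B) (mat_adj A)"
  by (cases A; cases B) (simp add: algebra_simps)

lemma of_int_mat_simp [simp]: "of_int_mat (a,b,c,d) = (of_int a, of_int b, of_int c, of_int d)"
  by (simp add: of_int_mat_def)

lemma of_int_mat_mult: "of_int_mat (mat_mult A B) = mat_mult (of_int_mat A) (of_int_mat B)"
  by (cases A; cases B) simp

lemma of_int_mat_adj: "of_int_mat (mat_adj A) = mat_adj (of_int_mat A)"
  by (cases A) simp

lemma mat_det_of_int_mat [simp]: "mat_det (of_int_mat A) = of_int (mat_det A)"
  by (cases A) simp

lemma SL2Z_iff_det: "A \<in> SL2Z \<longleftrightarrow> mat_det A = 1"
  by (cases A) (simp add: SL2Z_def)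

lemma moeb_simp: "moeb (a,b,c,d) z = (of_real a * z + of_real b) / (of_real c * z + of_real d)"
  by (simp add: moeb_def)

lemma moeb_denom_nonzero:
  assumes "Im z > 0" "(c::real) \<noteq> 0 \<or> d \<noteq> 0"
  shows "of_real c * z + of_real d \<noteq> 0"
proof
  assume "of_real c * z + of_real d = 0"
  then have "Im (of_real c * z + of_real d) = 0" "Re (of_real c * z + of_real d) = 0" by auto
  then have "c * Im z = 0" "c * Re z + d = 0" by auto
  with assms show False by auto
qed

lemma Im_moeb_pos:
  assumes "Im z > 0" "mat_det N > (0::real)"
  shows "Im (moeb N z) > 0"
proof -
  obtain a b c d where N: "N = (a,b,c,d)" by (cases N)
  let ?w = "of_real c * z + of_real d"
  have "c \<noteq> 0 \<or> d \<noteq> 0" using assms(2) N by auto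
  then have "?w \<noteq> 0" by (rule moeb_denom_nonzero[OF assms(1)])
  then have "(Re ?w)^2 + (Im ?w)^2 > 0" by (simp add: complex_eq_iff sum_power2_gt_zero_iff)
  moreover have "Im (moeb N z) = (a*d - b*c) * Im z / ((Re ?w)^2 + (Im ?w)^2)"
    unfolding N moeb_simp by (simp add: Im_divide algebra_simps power2_eq_square)
  ultimately show ?thesis using assms N by simp
qed

lemma moeb_mat_mult:
  assumes "Im z > 0" "mat_det K > (0::real)" "mat_det M \<noteq> 0"
  shows "moeb M (moeb K z) = moeb (mat_mult M K) z"
proof -
  obtain a b c d where M: "M = (a,b,c,d)" by (cases M)
  obtain e f g h where K: "K = (e,f,g,h)" by (cases K)
  let ?u = "of_real e * z + of_real f" and ?v = "of_real g * z + of_real h"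
  have "g \<noteq> 0 \<or> h \<noteq> 0" "c \<noteq> 0 \<or> d \<noteq> 0" using assms(2,3) K M by auto
  then have "?v \<noteq> 0" "of_real c * moeb K z + of_real d \<noteq> 0"
    using moeb_denom_nonzero assms(1) Im_moeb_pos[OF assms(1,2)] by auto
  then have "moeb M (moeb K z) = (of_real a * ?u + of_real b * ?v) / (of_real c * ?u + of_real d * ?v)"
    unfolding M K moeb_simp by (simp add: divide_simps)
  also have "\<dots> = moeb (mat_mult M K) z"
    unfolding M K moeb_simp mat_mult_simp by (simp add: algebra_simps)
  finally show ?thesis .
qed

lemma moeb_adj_moeb:
  assumes "Im z > 0" "mat_det N = (1::real)"
  shows "moeb (mat_adj N) (moeb N z) = z"
  using moeb_mat_mult[of z N "mat_adj N"] mat_adj_mult[of N] assms by (simp add: moeb_simp)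

section \<open>Endpoints of geodesics\<close>

lemma moeb_inverse_form:
  fixes a b c d z :: complex
  assumes "z \<noteq> 0"
  shows "(a*z + b) / (c*z + d) = (a + b * inverse z) / (c + d * inverse z)"
proof -
  have "a + b * inverse z = (a*z + b) / z" "c + d * inverse z = (c*z + d) / z"
    using assms by (simp_all add: field_simps)
  then show ?thesis using assms by simp
qed

abbreviation geod :: "real mat2 \<Rightarrow> real \<Rightarrow> complex" where
  "geod N t \<equiv> moeb N (\<i> * of_real (exp t))"

lemma geod_tendsto_at_top:
  assumes "\<gamma> \<noteq> 0"
  shows "(geod (\<alpha>,\<beta>,\<gamma>,\<delta>) \<longlongrightarrow> of_real (\<alpha>/\<gamma>)) at_top"
proof -
  have "filterlim (\<lambda>t. \<i> * of_real (exp t)) at_infinity at_top"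
    by (rule filterlim_norm_at_top_imp_at_infinity) (simp add: norm_mult exp_at_top)
  then have w: "((\<lambda>t. inverse (\<i> * of_real (exp t))) \<longlongrightarrow> 0) at_top"
    by (rule filterlim_compose[OF tendsto_inverse_0])
  have "geod (\<alpha>,\<beta>,\<gamma>,\<delta>) t = (of_real \<alpha> + of_real \<beta> * inverse (\<i> * of_real (exp t))) /
      (of_real \<gamma> + of_real \<delta> * inverse (\<i> * of_real (exp t)))" for t
    unfolding moeb_simp by (rule moeb_inverse_form) simp
  moreover have "((\<lambda>t. (of_real \<alpha> + of_real \<beta> * inverse (\<i> * of_real (exp t))) /
      (of_real \<gamma> + of_real \<delta> * inverse (\<i> * of_real (exp t)))) \<longlongrightarrow>
      (of_real \<alpha> + of_real \<beta> * 0) / (of_real \<gamma> + of_real \<delta> * 0)) at_top"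
    by (intro tendsto_intros w) (use assms in simp)
  ultimately show ?thesis by simp
qed

lemma geod_not_tendsto_at_top:
  assumes "\<alpha>*\<delta> - \<beta>*\<gamma> = (1::real)" "\<gamma> = 0"
  shows "\<not> (geod (\<alpha>,\<beta>,\<gamma>,\<delta>) \<longlongrightarrow> L) at_top"
proof
  assume lim: "(geod (\<alpha>,\<beta>,\<gamma>,\<delta>) \<longlongrightarrow> L) at_top"
  have "\<alpha> \<noteq> 0" "\<delta> \<noteq> 0" using assms by auto
  have low: "(\<bar>\<alpha>\<bar>/\<bar>\<delta>\<bar>) * exp t \<le> norm (geod (\<alpha>,\<beta>,\<gamma>,\<delta>) t)" for t
  proof -
    have "\<bar>\<alpha>\<bar> * exp t = \<bar>Im (of_real \<alpha> * (\<i> * of_real (exp t)) + of_real \<beta>)\<bar>"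
      by (simp add: abs_mult)
    also have "\<dots> \<le> norm (of_real \<alpha> * (\<i> * of_real (exp t)) + (of_real \<beta>::complex))"
      by (rule abs_Im_le_cmod)
    finally show ?thesis
      using assms(2) \<open>\<delta> \<noteq> 0\<close> by (simp add: moeb_simp norm_divide divide_right_mono)
  qed
  have "filterlim (\<lambda>t. (\<bar>\<alpha>\<bar>/\<bar>\<delta>\<bar>) * exp t) at_top at_top"
    using \<open>\<alpha> \<noteq> 0\<close> \<open>\<delta> \<noteq> 0\<close> by (intro filterlim_tendsto_pos_mult_at_top[OF tendsto_const] exp_at_top) auto
  then have "filterlim (\<lambda>t. norm (geod (\<alpha>,\<beta>,\<gamma>,\<delta>) t)) at_top at_top"
    by (rule filterlim_at_top_mono) (use low in auto)
  then have "filterlim (geod (\<alpha>,\<beta>,\<gamma>,\<delta>)) at_infinity at_top"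
    by (rule filterlim_norm_at_top_imp_at_infinity)
  from not_tendsto_and_filterlim_at_infinity[OF _ lim this] show False by simp
qed

lemma geod_tendsto_at_top_iff:
  assumes "\<alpha>*\<delta> - \<beta>*\<gamma> = (1::real)"
  shows "(geod (\<alpha>,\<beta>,\<gamma>,\<delta>) \<longlongrightarrow> of_real x) at_top \<longleftrightarrow> \<gamma> \<noteq> 0 \<and> x = \<alpha>/\<gamma>"
proof
  assume lim: "(geod (\<alpha>,\<beta>,\<gamma>,\<delta>) \<longlongrightarrow> of_real x) at_top"
  then have "\<gamma> \<noteq> 0" using geod_not_tendsto_at_top[OF assms] by blast
  with lim have "(of_real x :: complex) = of_real (\<alpha>/\<gamma>)"
    using tendsto_unique[OF _ lim geod_tendsto_at_top] by simp
  with \<open>\<gamma> \<noteq> 0\<close> show "\<gamma> \<noteq> 0 \<and> x = \<alpha>/\<gamma>" by (simp del: of_real_divide)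
qed (use geod_tendsto_at_top in blast)

text \<open>Time reversal is precomposition with \<open>z \<mapsto> -1/z\<close>.\<close>
lemma geod_uminus: "geod (\<alpha>,\<beta>,\<gamma>,\<delta>) (-t) = geod (\<beta>,-\<alpha>,\<delta>,-\<gamma>) t"
proof -
  define z where "z = \<i> * of_real (exp t)"
  have "z \<noteq> 0" unfolding z_def by simp
  have "\<i> * of_real (exp (-t)) = - inverse z"
    unfolding z_def by (simp add: exp_minus inverse_eq_divide field_simps)
  moreover have "moeb (\<alpha>,\<beta>,\<gamma>,\<delta>) (- inverse z) = moeb (\<beta>,-\<alpha>,\<delta>,-\<gamma>) z"
    unfolding moeb_simp
    using moeb_inverse_form[OF \<open>z \<noteq> 0\<close>, of "of_real \<beta>" "- of_real \<alpha>" "of_real \<delta>" "- of_real \<gamma>"]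
    by (simp add: algebra_simps)
  ultimately show ?thesis unfolding z_def by simp
qed

lemma geod_tendsto_at_bot_iff:
  assumes "\<alpha>*\<delta> - \<beta>*\<gamma> = (1::real)"
  shows "(geod (\<alpha>,\<beta>,\<gamma>,\<delta>) \<longlongrightarrow> of_real y) at_bot \<longleftrightarrow> \<delta> \<noteq> 0 \<and> y = \<beta>/\<delta>"
proof -
  have "\<beta> * (-\<gamma>) - (-\<alpha>) * \<delta> = 1" using assms by (simp add: algebra_simps)
  then show ?thesis
    unfolding filterlim_at_bot_mirror geod_uminus by (rule geod_tendsto_at_top_iff)
qed

section \<open>Modular transformations translating a geodesic\<close>

text \<open>\<open>translates_axis P N l\<close>: the modular transformation \<open>P\<close> maps the geodesic \<open>geod N\<close>
  onto itself, translating it by \<open>2 ln l\<close>. Its attracting and repelling fixed points are then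
  the forward and backward endpoints \<open>\<alpha>/\<gamma>\<close> and \<open>\<beta>/\<delta>\<close> of \<open>geod (\<alpha>,\<beta>,\<gamma>,\<delta>)\<close>.\<close>
definition translates_axis :: "int mat2 \<Rightarrow> real mat2 \<Rightarrow> real \<Rightarrow> bool" where
  "translates_axis P N l \<longleftrightarrow> mat_det P = 1 \<and> mat_det N = 1 \<and> 1 < l \<and>
     mat_mult (of_int_mat P) N = mat_mult N (l,0,0,1/l)"

definition mat_conj :: "int mat2 \<Rightarrow> int mat2 \<Rightarrow> int mat2" where
  "mat_conj k P = mat_mult (mat_mult k P) (mat_adj k)"

lemma mat_conj_conj:
  "mat_det k1 = 1 \<Longrightarrow> mat_det k2 = 1 \<Longrightarrow> mat_conj k2 (mat_conj k1 P) = mat_conj (mat_mult k2 k1) P"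
  by (simp add: mat_conj_def mat_mult_assoc mat_adj_mult_distrib)

lemma translates_axis_conj:
  assumes "translates_axis P N l" "mat_det k = 1"
  shows "translates_axis (mat_conj k P) (mat_mult (of_int_mat k) N) l"
proof -
  let ?K = "of_int_mat k" and ?P = "of_int_mat P"
  have "mat_det ?K = 1" using assms(2) by simp
  have "mat_mult (of_int_mat (mat_conj k P)) (mat_mult ?K N)
      = mat_mult ?K (mat_mult ?P (mat_mult (mat_mult (mat_adj ?K) ?K) N))"
    by (simp add: mat_conj_def of_int_mat_mult of_int_mat_adj mat_mult_assoc)
  also have "\<dots> = mat_mult (mat_mult ?K N) (l,0,0,1/l)"
    using assms(1) mat_adj_mult[OF \<open>mat_det ?K = 1\<close>]
    by (simp add: translates_axis_def mat_mult_assoc)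
  finally show ?thesis using assms
    by (simp add: translates_axis_def mat_conj_def mat_det_mult)
qed

lemma translates_axis_entries:
  assumes "translates_axis (a,b,c,d) (\<alpha>,\<beta>,\<gamma>,\<delta>) l"
  shows "of_int a = l*\<alpha>*\<delta> - \<beta>*\<gamma>/l" "of_int b = \<alpha>*\<beta>*(1/l - l)"
    "of_int c = \<gamma>*\<delta>*(l - 1/l)" "of_int d = \<alpha>*\<delta>/l - l*\<beta>*\<gamma>"
proof -
  let ?N = "(\<alpha>,\<beta>,\<gamma>,\<delta>)"
  have N: "mat_det ?N = 1" and PN: "mat_mult (of_int_mat (a,b,c,d)) ?N = mat_mult ?N (l,0,0,1/l)"
    using assms by (simp_all add: translates_axis_def)
  have "of_int_mat (a,b,c,d) = mat_mult (mat_mult (of_int_mat (a,b,c,d)) ?N) (mat_adj ?N)"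
    using mat_mult_adj[OF N] by (simp only: mat_mult_assoc mat_mult_id)
  also have "\<dots> = mat_mult (mat_mult ?N (l,0,0,1/l)) (mat_adj ?N)" by (simp only: PN)
  finally show "of_int a = l*\<alpha>*\<delta> - \<beta>*\<gamma>/l" "of_int b = \<alpha>*\<beta>*(1/l - l)"
    "of_int c = \<gamma>*\<delta>*(l - 1/l)" "of_int d = \<alpha>*\<delta>/l - l*\<beta>*\<gamma>"
    by (simp_all add: algebra_simps)
qed

lemma translates_axis_trace:
  assumes "translates_axis (a,b,c,d) N l"
  shows "of_int (a + d) = l + 1/l" "a + d > 2"
proof -
  obtain \<alpha> \<beta> \<gamma> \<delta> where N: "N = (\<alpha>,\<beta>,\<gamma>,\<delta>)" by (cases N)
  have "\<alpha>*\<delta> - \<beta>*\<gamma> = 1" "l > 1" using assms N by (simp_all add: translates_axis_def)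
  then show tr: "of_int (a + d) = l + 1/l"
    using translates_axis_entries[OF assms[unfolded N]] by (simp add: field_simps) algebra
  have "(l - 1)^2 > 0" using \<open>l > 1\<close> by simp
  then have "l + 1/l > 2" using \<open>l > 1\<close> by (simp add: field_simps power2_eq_square)
  with tr show "a + d > 2" by linarith
qed

lemma translates_axis_nondegenerate:
  assumes "translates_axis (a,b,c,d) (\<alpha>,\<beta>,\<gamma>,\<delta>) l"
  shows "c \<noteq> 0" "\<gamma> \<noteq> 0" "\<delta> \<noteq> 0"
proof -
  have "a*d - b*c = 1" using assms by (simp add: translates_axis_def)
  moreover have "a + d > 2" by (rule translates_axis_trace[OF assms])
  ultimately show "c \<noteq> 0" using zmult_eq_1_iff[of a d] by auto
  with translates_axis_entries(3)[OF assms] show "\<gamma> \<noteq> 0" "\<delta> \<noteq> 0" by auto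
qed

lemma translates_axis_fixed_points:
  assumes "translates_axis (a,b,c,d) (\<alpha>,\<beta>,\<gamma>,\<delta>) l"
    and x: "x = \<alpha>/\<gamma>" and y: "y = \<beta>/\<delta>"
  shows "of_int c * x + of_int d = l" "of_int a * x + of_int b = l * x"
    "of_int c * y + of_int d = 1/l" "of_int a * y + of_int b = y / l"
    "of_int c * x * y = - of_int b"
proof -
  have det: "\<alpha>*\<delta> - \<beta>*\<gamma> = 1" and "l \<noteq> 0" using assms by (auto simp: translates_axis_def)
  note nz = translates_axis_nondegenerate(2,3)[OF assms(1)]
  note e = translates_axis_entries[OF assms(1)]
  show "of_int c * x + of_int d = l"
    unfolding e x using nz \<open>l \<noteq> 0\<close> det by (simp add: field_simps) algebra
  show "of_int a * x + of_int b = l * x"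
    unfolding e x using nz \<open>l \<noteq> 0\<close> det by (simp add: field_simps) algebra
  show "of_int c * y + of_int d = 1/l"
    unfolding e y using nz \<open>l \<noteq> 0\<close> det by (simp add: field_simps)
  show "of_int a * y + of_int b = y / l"
    unfolding e y using nz \<open>l \<noteq> 0\<close> det by (simp add: field_simps) algebra
  show "of_int c * x * y = - of_int b"
    unfolding e x y using nz \<open>l \<noteq> 0\<close> by (simp add: field_simps)
qed

lemma moeb_dilating_imag_axis:
  assumes "mat_det (k1,k2,k3,k4) = (1::real)" "u > 0"
    and "moeb (k1,k2,k3,k4) (\<i> * of_real u) = \<i> * of_real (E * u)"
  shows "k2 = - E * k3 * u^2" "k1 = E * k4"
proof -
  have "k3 \<noteq> 0 \<or> k4 \<noteq> 0" using assms(1) by auto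
  then have "of_real k3 * (\<i> * of_real u) + of_real k4 \<noteq> 0"
    by (rule moeb_denom_nonzero[rotated]) (use assms(2) in simp)
  with assms(3) have "of_real k1 * (\<i> * of_real u) + of_real k2
      = (\<i> * of_real (E * u)) * (of_real k3 * (\<i> * of_real u) + of_real k4)"
    unfolding moeb_simp by (simp add: divide_eq_eq)
  then have "k2 = - E * u * u * k3" "k1 * u = E * k4 * u"
    by (simp_all add: complex_eq_iff algebra_simps)
  then show "k2 = - E * k3 * u^2" "k1 = E * k4" using assms(2) by (simp_all add: power2_eq_square)
qed

lemma moeb_fixing_imag_axis:
  assumes "mat_det K = (1::real)" "l > 0"
    and "\<And>u. u > 0 \<Longrightarrow> moeb K (\<i> * of_real u) = \<i> * of_real (l^2 * u)"
  shows "K = (l,0,0,1/l) \<or> K = (-l,0,0,-(1/l))"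
proof -
  obtain k1 k2 k3 k4 where K: "K = (k1,k2,k3,k4)" by (cases K)
  note dil = moeb_dilating_imag_axis[OF assms(1)[unfolded K] _ assms(3)[unfolded K]]
  have "k3 = 0" "k2 = 0" "k1 = l^2 * k4"
    using dil[of 1] dil[of 2] assms(2) by auto
  moreover from this have "(k4 * l)^2 = 1" using assms(1) K by (simp add: power2_eq_square algebra_simps)
  then have "k4 * l = 1 \<or> k4 * l = -1" by (simp add: power2_eq_1_iff)
  ultimately show ?thesis
  proof (elim conjE disjE)
    assume "k3 = 0" "k2 = 0" "k1 = l^2 * k4" "k4 * l = 1"
    then show ?thesis using K assms(2) by (simp add: field_simps power2_eq_square)
  next
    assume "k3 = 0" "k2 = 0" "k1 = l^2 * k4" "k4 * l = -1"
    moreover have "k1 = l * (k4 * l)"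
      using \<open>k1 = l^2 * k4\<close> by (simp add: power2_eq_square algebra_simps)
    ultimately have "k1 = - l" by simp
    with \<open>k3 = 0\<close> \<open>k2 = 0\<close> \<open>k4 * l = -1\<close> show ?thesis using K assms(2) by (simp add: field_simps)
  qed
qed

lemma closed_geod_translates_axis:
  assumes H: "mat_det H = 1" and "T > 0" "mat_det g = 1"
    and per: "\<And>t. geod H (t + T) = moeb (of_int_mat g) (geod H t)"
  shows "\<exists>P l. translates_axis P H l"
proof -
  let ?G = "of_int_mat g"
  define K where "K = mat_mult (mat_adj H) (mat_mult ?G H)"
  define l where "l = exp (T/2)"
  have G: "mat_det ?G = 1" using assms(3) by simp
  have "l > 1" unfolding l_def using \<open>T > 0\<close> by simp
  have "moeb K (\<i> * of_real u) = \<i> * of_real (l^2 * u)" if "u > 0" for u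
  proof -
    have "exp (ln u + T) = l^2 * u"
      using that by (simp add: l_def exp_add power2_eq_square exp_add[symmetric])
    have "moeb K (\<i> * of_real u) = moeb (mat_adj H) (moeb ?G (geod H (ln u)))"
      using that G H by (simp add: K_def moeb_mat_mult mat_det_mult)
    also have "\<dots> = moeb (mat_adj H) (geod H (ln u + T))" by (simp only: per)
    also have "\<dots> = moeb (mat_adj H) (moeb H (\<i> * of_real (l^2 * u)))"
      by (simp only: \<open>exp (ln u + T) = l^2 * u\<close>)
    also have "\<dots> = \<i> * of_real (l^2 * u)"
      by (rule moeb_adj_moeb[OF _ H]) (use that \<open>l > 1\<close> in simp)
    finally show ?thesis .
  qed
  moreover have "mat_det K = 1" using G H by (simp add: K_def mat_det_mult)
  ultimately have K: "K = (l,0,0,1/l) \<or> K = (-l,0,0,-(1/l))"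
    using moeb_fixing_imag_axis \<open>l > 1\<close> by simp
  have GH: "mat_mult ?G H = mat_mult H K"
    using mat_mult_adj[OF H] by (simp add: K_def mat_mult_assoc[symmetric])
  from K show ?thesis
  proof
    assume "K = (l,0,0,1/l)"
    then have "translates_axis g H l" using GH assms \<open>l > 1\<close> by (simp add: translates_axis_def)
    then show ?thesis by blast
  next
    assume "K = (-l,0,0,-(1/l))"
    then have "mat_mult (of_int_mat (mat_mult (-1,0,0,-1) g)) H = mat_mult H (l,0,0,1/l)"
      using GH by (cases H; cases g) (simp add: algebra_simps)
    then have "translates_axis (mat_mult (-1,0,0,-1) g) H l"
      using assms \<open>l > 1\<close> by (simp add: translates_axis_def mat_det_mult)
    then show ?thesis by blast
  qed
qed

section \<open>Reduction to a word in the Lehner digits\<close>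

definition sl2z_conj :: "int mat2 \<Rightarrow> real mat2 \<Rightarrow> int mat2 \<Rightarrow> real mat2 \<Rightarrow> bool" where
  "sl2z_conj P N P' N' \<longleftrightarrow>
     (\<exists>k. mat_det k = 1 \<and> P' = mat_conj k P \<and> N' = mat_mult (of_int_mat k) N)"

lemma sl2z_conjI: "mat_det k = 1 \<Longrightarrow> sl2z_conj P N (mat_conj k P) (mat_mult (of_int_mat k) N)"
  unfolding sl2z_conj_def by blast

lemma sl2z_conj_trans:
  assumes "sl2z_conj P N P' N'" "sl2z_conj P' N' P'' N''"
  shows "sl2z_conj P N P'' N''"
proof -
  obtain k1 k2 where "mat_det k1 = 1" "P' = mat_conj k1 P" "N' = mat_mult (of_int_mat k1) N"
    "mat_det k2 = 1" "P'' = mat_conj k2 P'" "N'' = mat_mult (of_int_mat k2) N'"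
    using assms unfolding sl2z_conj_def by blast
  then show ?thesis
    using sl2z_conjI[of "mat_mult k2 k1" P N]
    by (simp add: mat_conj_conj mat_det_mult of_int_mat_mult mat_mult_assoc)
qed

lemma sl2z_conj_translates_axis:
  "sl2z_conj P N P' N' \<Longrightarrow> translates_axis P N l \<Longrightarrow> translates_axis P' N' l"
  unfolding sl2z_conj_def using translates_axis_conj by blast

lemma mat_conj_translation: "mat_conj (1,m,0,1) (a,b,c,d) = (a + m*c, b + m*(d - a) - m*m*c, c, d - m*c)"
  by (simp add: mat_conj_def algebra_simps)

lemma mat_conj_rotation: "mat_conj (0,-1,1,0) (a,b,c,d) = (d,-c,-b,a)"
  by (simp add: mat_conj_def)

lemma hyperbolic_offdiag_nonzero:
  fixes a b c d :: int
  assumes "a*d - b*c = 1" "\<bar>a + d\<bar> > 2"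
  shows "b \<noteq> 0" "c \<noteq> 0"
proof -
  have "b*c \<noteq> 0"
  proof
    assume "b*c = 0"
    then have "a*d = 1" using assms(1) by auto
    then show False using assms(2) zmult_eq_1_iff[of a d] by auto
  qed
  then show "b \<noteq> 0" "c \<noteq> 0" by auto
qed

lemma exists_nearest_even_multiple:
  fixes e c :: int
  assumes "c \<noteq> 0"
  shows "\<exists>m. \<bar>e - 2*m*c\<bar> \<le> \<bar>c\<bar>"
proof -
  define q where "q = real_of_int e / (2 * real_of_int c)"
  define m where "m = \<lfloor>q + 1/2\<rfloor>"
  have "real_of_int (e - 2*m*c) = 2 * real_of_int c * (q - real_of_int m)"
    unfolding q_def using assms by (simp add: field_simps)
  then have "\<bar>real_of_int (e - 2*m*c)\<bar> = 2 * \<bar>real_of_int c\<bar> * \<bar>q - real_of_int m\<bar>"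
    by (simp add: abs_mult)
  also have "\<dots> \<le> 2 * \<bar>real_of_int c\<bar> * (1/2)"
  proof (rule mult_left_mono)
    have "real_of_int m \<le> q + 1/2" "q + 1/2 < real_of_int m + 1" unfolding m_def by linarith+
    then show "\<bar>q - real_of_int m\<bar> \<le> 1/2" by linarith
  qed simp
  finally have "\<bar>real_of_int (e - 2*m*c)\<bar> \<le> real_of_int \<bar>c\<bar>" by simp
  then show ?thesis by (intro exI[of _ m]) linarith
qed

text \<open>For a hyperbolic matrix with \<open>|d - a| \<le> |c|\<close>, the discriminant identity
  \<open>(d - a)\<^sup>2 + 4bc = (a + d)\<^sup>2 - 4 \<ge> 5\<close> forces \<open>|b|\<close> to be much smaller than \<open>|c|\<close> when \<open>bc < 0\<close>.\<close>
lemma hyperbolic_offdiag_descent: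
  fixes a b c d :: int
  assumes "a*d - b*c = 1" "\<bar>a + d\<bar> > 2" "\<bar>d - a\<bar> \<le> \<bar>c\<bar>" "b*c < 0"
  shows "4 * \<bar>b\<bar> < \<bar>c\<bar>"
proof -
  have "(d - a)^2 \<le> c^2" using assms(3) by (simp only: abs_le_square_iff)
  moreover have "(d - a)^2 + 4*(b*c) = (a + d)^2 - 4" using assms(1) by (simp add: power2_eq_square algebra_simps)
  moreover have "(a + d)^2 \<ge> 9"
    using power_mono[of 3 "\<bar>a + d\<bar>" 2] assms(2) by simp
  ultimately have "4 * (- (b*c)) < c^2" by linarith
  moreover have "- (b*c) = \<bar>b\<bar> * \<bar>c\<bar>"
    using assms(4) abs_mult[of b c] by linarith
  ultimately have "(4 * \<bar>b\<bar>) * \<bar>c\<bar> < \<bar>c\<bar> * \<bar>c\<bar>"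
    by (simp add: power2_eq_square abs_mult_self_eq mult.assoc)
  then show ?thesis by (rule mult_right_less_imp_less) simp
qed

lemma hyperbolic_conj_offdiag_same_sign:
  fixes a b c d :: int
  assumes "a*d - b*c = 1" "\<bar>a + d\<bar> > 2"
  shows "\<exists>k a' b' c' d'. mat_det k = 1 \<and> mat_conj k (a,b,c,d) = (a',b',c',d') \<and> b'*c' > 0"
  using assms
proof (induction "nat \<bar>c\<bar>" arbitrary: a b c d rule: less_induct)
  case less
  have "c \<noteq> 0" using hyperbolic_offdiag_nonzero[OF less.prems] by simp
  obtain m where m: "\<bar>(d - a) - 2*m*c\<bar> \<le> \<bar>c\<bar>" using exists_nearest_even_multiple[OF \<open>c \<noteq> 0\<close>] by blast
  define a1 b1 d1 where "a1 = a + m*c" "b1 = b + m*(d - a) - m*m*c" "d1 = d - m*c"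
  have R: "mat_conj (1,m,0,1) (a,b,c,d) = (a1,b1,c,d1)"
    unfolding a1_b1_d1_def by (rule mat_conj_translation)
  have det1: "a1*d1 - b1*c = 1" and tr1: "a1 + d1 = a + d"
    using less.prems(1) unfolding a1_b1_d1_def by (simp_all add: algebra_simps)
  then have "b1 \<noteq> 0" using hyperbolic_offdiag_nonzero[of a1 d1 b1 c] less.prems(2) by simp
  show ?case
  proof (cases "b1*c > 0")
    case True
    with R show ?thesis by (intro exI[of _ "(1,m,0,1)"]) auto
  next
    case False
    with \<open>b1 \<noteq> 0\<close> \<open>c \<noteq> 0\<close> have "b1*c < 0" by (simp add: linorder_not_less order_le_less)
    moreover have "\<bar>d1 - a1\<bar> \<le> \<bar>c\<bar>" using m unfolding a1_b1_d1_def by (simp add: algebra_simps)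
    ultimately have "4 * \<bar>b1\<bar> < \<bar>c\<bar>"
      using hyperbolic_offdiag_descent[OF det1] tr1 less.prems(2) by simp
    then have "nat \<bar>-b1\<bar> < nat \<bar>c\<bar>" using \<open>c \<noteq> 0\<close> by (simp; linarith)
    moreover have "d1*a1 - (-c)*(-b1) = 1" "\<bar>d1 + a1\<bar> > 2"
      using det1 tr1 less.prems(2) by (simp_all add: algebra_simps)
    ultimately obtain k a' b' c' d' where
      k: "mat_det k = 1" "mat_conj k (d1,-c,-b1,a1) = (a',b',c',d')" "b'*c' > 0"
      using less.hyps by blast
    have "mat_conj (mat_mult k (mat_mult (0,-1,1,0) (1,m,0,1))) (a,b,c,d)
        = mat_conj k (mat_conj (0,-1,1,0) (mat_conj (1,m,0,1) (a,b,c,d)))"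
      using mat_conj_conj[of "(1,m,0,1)" "(0,-1,1,0)"] k(1)
        mat_conj_conj[of "mat_mult (0,-1,1,0) (1,m,0,1)" k] by (simp add: mat_det_mult)
    also have "\<dots> = (a',b',c',d')" using k R by (simp add: mat_conj_rotation)
    finally have "mat_conj (mat_mult k (mat_mult (0,-1,1,0) (1,m,0,1))) (a,b,c,d) = (a',b',c',d')" .
    moreover have "mat_det (mat_mult k (mat_mult (0,-1,1,0) (1,m,0,1))) = 1"
      using k(1) by (simp add: mat_det_mult)
    ultimately show ?thesis using k(3) by blast
  qed
qed

lemma hyperbolic_diag_pos:
  fixes a b c d :: int
  assumes "a*d - b*c = 1" "a + d > 2" "b*c > 0"
  shows "a > 0" "d > 0"
proof -
  have "a*d > 1" using assms(1,3) by linarith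
  then show "a > 0" "d > 0" using assms(2) zero_less_mult_iff[of a d] by linarith+
qed

lemma translates_axis_conj_offdiag_pos:
  assumes "translates_axis P N l"
  shows "\<exists>a b c d N'. sl2z_conj P N (a,b,c,d) N' \<and> translates_axis (a,b,c,d) N' l \<and> b > 0 \<and> c > 0"
proof -
  obtain a b c d where P: "P = (a,b,c,d)" by (cases P)
  have "a*d - b*c = 1" "\<bar>a + d\<bar> > 2"
    using assms translates_axis_trace(2)[of a b c d N l] by (auto simp: P translates_axis_def)
  then obtain k a' b' c' d' where k: "mat_det k = 1" "mat_conj k P = (a',b',c',d')" "b'*c' > 0"
    using hyperbolic_conj_offdiag_same_sign P by blast
  define N' where "N' = mat_mult (of_int_mat k) N"
  have C: "sl2z_conj P N (a',b',c',d') N'" unfolding N'_def using sl2z_conjI[OF k(1)] k(2) by metis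
  show ?thesis
  proof (cases "c' > 0")
    case True
    with k(3) have "b' > 0" by (simp add: zero_less_mult_iff)
    with True C show ?thesis using sl2z_conj_translates_axis[OF C assms] by blast
  next
    case False
    with k(3) have "-b' > 0" "-c' > 0" by (auto simp: zero_less_mult_iff)
    moreover have "sl2z_conj P N (d',-c',-b',a') (mat_mult (of_int_mat (0,-1,1,0)) N')"
      using sl2z_conj_trans[OF C sl2z_conjI[of "(0,-1,1,0)"]] by (simp add: mat_conj_rotation)
    ultimately show ?thesis using sl2z_conj_translates_axis assms by blast
  qed
qed

lemma translates_axis_endpoints_sign:
  assumes "translates_axis (a,b,c,d) (\<alpha>,\<beta>,\<gamma>,\<delta>) l" "b > 0" "c > 0"
  shows "\<beta>/\<delta> < 0" "0 < \<alpha>/\<gamma>"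
proof -
  define x y where "x = \<alpha>/\<gamma>" "y = \<beta>/\<delta>"
  note fp = translates_axis_fixed_points[OF assms(1) x_y_def]
  have "l > 1" using assms(1) by (simp add: translates_axis_def)
  then have "1/l < l" by (smt (verit) divide_less_eq_1_pos)
  with fp(1,3) have "of_int c * y < of_int c * x" by linarith
  with assms(3) have "y < x" by simp
  moreover have "of_int c * (x * y) < 0" using fp(5) assms(2) by (simp add: mult.assoc)
  with assms(3) have "x * y < 0" by (simp add: mult_less_0_iff)
  ultimately show "\<beta>/\<delta> < 0" "0 < \<alpha>/\<gamma>" unfolding x_y_def[symmetric] by (auto simp: mult_less_0_iff)
qed

lemma translates_axis_entries_pos:
  assumes "translates_axis (a,b,c,d) (\<alpha>,\<beta>,\<gamma>,\<delta>) l" "\<beta>/\<delta> < 0" "0 < \<alpha>/\<gamma>"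
  shows "a > 0" "b > 0" "c > 0" "d > 0"
proof -
  define x y where "x = \<alpha>/\<gamma>" "y = \<beta>/\<delta>"
  have "y < 0" "0 < x" using assms(2,3) unfolding x_y_def .
  note fp = translates_axis_fixed_points[OF assms(1) x_y_def]
  have "l > 1" using assms(1) by (simp add: translates_axis_def)
  then have "1/l < l" by (smt (verit) divide_less_eq_1_pos)
  with fp(1,3) have "of_int c * (x - y) > 0" by (simp add: algebra_simps)
  moreover have "x - y > 0" using \<open>y < 0\<close> \<open>0 < x\<close> by simp
  ultimately show "c > 0" by (simp add: zero_less_mult_iff)
  moreover have "x * y < 0" using \<open>y < 0\<close> \<open>0 < x\<close> by (simp add: mult_pos_neg)
  ultimately have "of_int c * (x * y) < 0" by (simp add: mult_pos_neg)
  then show "b > 0" using fp(5) by (simp add: mult.assoc)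
  moreover have "a*d - b*c = 1" "a + d > 2"
    using assms(1) translates_axis_trace(2) by (auto simp: translates_axis_def)
  ultimately show "a > 0" "d > 0" using hyperbolic_diag_pos \<open>c > 0\<close> by simp_all
qed

lemma translates_axis_shift:
  assumes "translates_axis (a,b,c,d) (\<alpha>,\<beta>,\<gamma>,\<delta>) l" "b > 0" "c > 0"
  shows "\<exists>P' \<alpha>' \<beta>' \<gamma>' \<delta>'. sl2z_conj (a,b,c,d) (\<alpha>,\<beta>,\<gamma>,\<delta>) P' (\<alpha>',\<beta>',\<gamma>',\<delta>') \<and>
    translates_axis P' (\<alpha>',\<beta>',\<gamma>',\<delta>') l \<and> 0 < \<alpha>'/\<gamma>' \<and> \<alpha>'/\<gamma>' \<le> 1 \<and> \<beta>'/\<delta>' < 0"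
proof -
  have "\<beta>/\<delta> < 0" "0 < \<alpha>/\<gamma>" using translates_axis_endpoints_sign[OF assms] by auto
  have "\<gamma> \<noteq> 0" "\<delta> \<noteq> 0" using translates_axis_nondegenerate[OF assms(1)] by auto
  define n where "n = \<lceil>\<alpha>/\<gamma>\<rceil> - 1"
  have "n \<ge> 0" using \<open>0 < \<alpha>/\<gamma>\<close> unfolding n_def by (simp add: ceiling_le_zero)
  have "(\<alpha> - n*\<gamma>)/\<gamma> = \<alpha>/\<gamma> - n" "(\<beta> - n*\<delta>)/\<delta> = \<beta>/\<delta> - n"
    using \<open>\<gamma> \<noteq> 0\<close> \<open>\<delta> \<noteq> 0\<close> by (simp_all add: field_simps)
  moreover have "0 < \<alpha>/\<gamma> - n" "\<alpha>/\<gamma> - n \<le> 1" unfolding n_def by linarith+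
  moreover have "\<beta>/\<delta> - n < 0" using \<open>\<beta>/\<delta> < 0\<close> \<open>n \<ge> 0\<close> by simp
  moreover have C: "sl2z_conj (a,b,c,d) (\<alpha>,\<beta>,\<gamma>,\<delta>)
      (mat_conj (1,-n,0,1) (a,b,c,d)) (\<alpha> - n*\<gamma>, \<beta> - n*\<delta>, \<gamma>, \<delta>)"
    using sl2z_conjI[of "(1,-n,0,1)" "(a,b,c,d)" "(\<alpha>,\<beta>,\<gamma>,\<delta>)"] by simp
  ultimately show ?thesis using sl2z_conj_translates_axis[OF C assms(1)]
    by (intro exI[of _ "mat_conj (1,-n,0,1) (a,b,c,d)"] exI[of _ "\<alpha> - n*\<gamma>"] exI[of _ "\<beta> - n*\<delta>"]
        exI[of _ \<gamma>] exI[of _ \<delta>]) simp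
qed

lemma sl2_nonneg_comparable:
  fixes a b c d :: int
  assumes "a \<ge> 0" "b \<ge> 0" "c \<ge> 0" "d \<ge> 0" "a*d - b*c = 1" "(a,b,c,d) \<noteq> (1,0,0,1)"
  shows "(c \<le> a \<and> d \<le> b) \<or> (a \<le> c \<and> b \<le> d)"
proof (rule ccontr)
  assume "\<not> ?thesis"
  then consider "a < c" "d < b" | "c < a" "b < d" by linarith
  then show False
  proof cases
    case 1
    then have "b*c \<ge> (d+1)*(a+1)" using assms by (intro mult_mono) auto
    then show False using assms(1,4,5) by (simp add: algebra_simps)
  next
    case 2
    then have "a*d \<ge> (c+1)*(b+1)" using assms by (intro mult_mono) auto
    then have "b = 0" "c = 0" using assms(2,3,5) by (simp_all add: algebra_simps)
    then have "a = 1" "d = 1" using assms(1,4,5) zmult_eq_1_iff[of a d] by auto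
    then show False using assms(6) \<open>b = 0\<close> \<open>c = 0\<close> by simp
  qed
qed

lemma translates_axis_column_order:
  assumes "translates_axis (a,b,c,d) (\<alpha>,\<beta>,\<gamma>,\<delta>) l"
    and "a > 0" "b > 0" "c > 0" "d > 0" "0 < \<alpha>/\<gamma>" "\<alpha>/\<gamma> \<le> 1"
  shows "a \<le> c" "b \<le> d" "\<alpha>/\<gamma> < 1"
proof -
  define x where "x = \<alpha>/\<gamma>"
  have x: "0 < x" "x \<le> 1" using assms(6,7) unfolding x_def .
  note fp = translates_axis_fixed_points[OF assms(1) x_def refl]
  have det: "a*d - b*c = 1" "l > 1" using assms(1) by (simp_all add: translates_axis_def)
  have not_eq: False if "x = 1" "(c \<le> a \<and> d \<le> b) \<or> (a \<le> c \<and> b \<le> d)"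
  proof -
    from fp(1,2) \<open>x = 1\<close> have "a + b = c + d" by simp
    with that(2) have "a = c" "b = d" by auto
    with det(1) show False by (simp add: mult.commute)
  qed
  have "(c \<le> a \<and> d \<le> b) \<or> (a \<le> c \<and> b \<le> d)"
    using sl2_nonneg_comparable[OF _ _ _ _ det(1)] assms(2-5) by auto
  moreover have "\<not> (c \<le> a \<and> d \<le> b)"
  proof
    assume "c \<le> a \<and> d \<le> b"
    then have "of_int (a - c) * x + of_int (b - d) \<ge> 0"
      using x by (intro add_nonneg_nonneg mult_nonneg_nonneg) auto
    then have "l * x \<ge> l" using fp(1,2) by (simp add: algebra_simps)
    then have "x = 1" using det(2) x(2) by (simp add: mult_le_cancel_left1)
    with \<open>c \<le> a \<and> d \<le> b\<close> show False using not_eq by blast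
  qed
  ultimately show "a \<le> c" "b \<le> d" by auto
  with not_eq have "x \<noteq> 1" by blast
  with x(2) have "x < 1" by simp
  then show "\<alpha>/\<gamma> < 1" unfolding x_def .
qed

lemma translates_axis_normal_form:
  assumes "translates_axis P N l"
  shows "\<exists>a b c d \<alpha> \<beta> \<gamma> \<delta>. sl2z_conj P N (a,b,c,d) (\<alpha>,\<beta>,\<gamma>,\<delta>) \<and>
    translates_axis (a,b,c,d) (\<alpha>,\<beta>,\<gamma>,\<delta>) l \<and>
    0 \<le> a \<and> 0 \<le> b \<and> a \<le> c \<and> b \<le> d \<and> 0 < \<alpha>/\<gamma> \<and> \<alpha>/\<gamma> < 1 \<and> \<beta>/\<delta> < 0"
proof -
  obtain a b c d N1 where C1: "sl2z_conj P N (a,b,c,d) N1" "translates_axis (a,b,c,d) N1 l"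
    and "b > 0" "c > 0"
    using translates_axis_conj_offdiag_pos[OF assms] by blast
  obtain \<alpha> \<beta> \<gamma> \<delta> where N1: "N1 = (\<alpha>,\<beta>,\<gamma>,\<delta>)" by (cases N1)
  obtain P2 \<alpha>' \<beta>' \<gamma>' \<delta>' where
    C12: "sl2z_conj (a,b,c,d) N1 P2 (\<alpha>',\<beta>',\<gamma>',\<delta>')" and T2: "translates_axis P2 (\<alpha>',\<beta>',\<gamma>',\<delta>') l"
    and x: "0 < \<alpha>'/\<gamma>'" "\<alpha>'/\<gamma>' \<le> 1" and y: "\<beta>'/\<delta>' < 0"
    using translates_axis_shift[OF C1(2)[unfolded N1] \<open>b > 0\<close> \<open>c > 0\<close>] N1 by blast
  obtain a' b' c' d' where P2: "P2 = (a',b',c',d')" by (cases P2)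
  note pos = translates_axis_entries_pos[OF T2[unfolded P2] y x(1)]
  note ord = translates_axis_column_order[OF T2[unfolded P2] pos x]
  have "sl2z_conj P N (a',b',c',d') (\<alpha>',\<beta>',\<gamma>',\<delta>')"
    using sl2z_conj_trans[OF C1(1) C12] P2 by simp
  with T2 P2 pos ord x(1) y show ?thesis by (intro exI) auto
qed

definition lehner_digits :: "(int \<times> int) set" where
  "lehner_digits = {(2,-1), (1,1)}"

text \<open>\<open>digit_mat (a,\<epsilon>)\<close> is the map \<open>v \<mapsto> a + \<epsilon>/v\<close>; \<open>farey_mat x\<close> is \<open>digit_mat x\<close> conjugated
  by the translation \<open>z \<mapsto> z + 1\<close>.\<close>
definition digit_mat :: "int \<times> int \<Rightarrow> int mat2" where
  "digit_mat x = (fst x, snd x, 1, 0)"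

definition farey_mat :: "int \<times> int \<Rightarrow> int mat2" where
  "farey_mat x = (if x = (2,-1) then (1,0,1,1) else (0,1,1,1))"

fun word_mat :: "(int \<times> int) list \<Rightarrow> int mat2" where
  "word_mat [] = (1,0,0,1)"
| "word_mat (x # xs) = mat_mult (digit_mat x) (word_mat xs)"

fun farey_word_mat :: "(int \<times> int) list \<Rightarrow> int mat2" where
  "farey_word_mat [] = (1,0,0,1)"
| "farey_word_mat (x # xs) = mat_mult (farey_mat x) (farey_word_mat xs)"

fun lehner_map :: "(int \<times> int) list \<Rightarrow> real \<Rightarrow> real" where
  "lehner_map [] v = v"
| "lehner_map (x # xs) v = of_int (fst x) + of_int (snd x) / lehner_map xs v"

fun dual_lehner_map :: "(int \<times> int) list \<Rightarrow> real \<Rightarrow> real" where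
  "dual_lehner_map [] u = u"
| "dual_lehner_map (x # xs) u = of_int (snd x) / (of_int (fst x) + dual_lehner_map xs u)"

lemma lehner_digit_ge_1:
  fixes v :: real
  assumes "x \<in> lehner_digits" "v \<ge> 1"
  shows "1 \<le> of_int (fst x) + of_int (snd x) / v"
proof -
  have "0 \<le> 1/v" "1/v \<le> 1" using assms(2) by auto
  with assms(1) show ?thesis by (auto simp: lehner_digits_def)
qed

lemma dual_lehner_digit_gt_minus_1:
  fixes u :: real
  assumes "x \<in> lehner_digits" "u > -1"
  shows "-1 < of_int (snd x) / (of_int (fst x) + u)"
proof -
  have "1/(2 + u) < 1" "0 < 1/(1 + u)" using assms(2) by (simp_all add: divide_less_eq)
  then have "-1 < (-1)/(2 + u)" "-1 < 1/(1 + u)" by linarith+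
  with assms(1) show ?thesis by (auto simp: lehner_digits_def add.commute)
qed

lemma farey_mat_conj:
  "x \<in> lehner_digits \<Longrightarrow> mat_mult (1,1,0,1) (farey_mat x) = mat_mult (digit_mat x) (1,1,0,1)"
  by (auto simp: lehner_digits_def digit_mat_def farey_mat_def)

lemma word_mat_eq_conj:
  assumes "set ds \<subseteq> lehner_digits"
  shows "word_mat ds = mat_conj (1,1,0,1) (farey_word_mat ds)"
proof -
  have "mat_mult (1,1,0,1) (farey_word_mat ds) = mat_mult (word_mat ds) (1,1,0,1)"
    using assms
  proof (induction ds)
    case (Cons x xs)
    have "mat_mult (1,1,0,1) (farey_word_mat (x # xs))
        = mat_mult (mat_mult (1,1,0,1) (farey_mat x)) (farey_word_mat xs)"
      by (simp only: farey_word_mat.simps mat_mult_assoc)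
    also have "\<dots> = mat_mult (digit_mat x) (mat_mult (1,1,0,1) (farey_word_mat xs))"
      using Cons.prems farey_mat_conj by (simp add: mat_mult_assoc)
    also have "\<dots> = mat_mult (word_mat (x # xs)) (1,1,0,1)"
      using Cons by (simp add: mat_mult_assoc)
    finally show ?case .
  qed simp
  then have "mat_conj (1,1,0,1) (farey_word_mat ds) = mat_mult (mat_mult (word_mat ds) (1,1,0,1)) (1,-1,0,1)"
    by (simp add: mat_conj_def)
  then show ?thesis by (simp add: mat_mult_assoc)
qed

lemma mat_det_word_mat: "mat_det (word_mat ds) = (\<Prod>i<length ds. - snd (ds ! i))"
proof (induction ds)
  case (Cons x xs)
  have "mat_det (word_mat (x # xs)) = (- snd x) * mat_det (word_mat xs)"
    by (simp add: mat_det_mult digit_mat_def)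
  also have "\<dots> = (\<Prod>i<length (x # xs). - snd ((x # xs) ! i))"
    using Cons.IH by (simp only: length_Cons prod.lessThan_Suc_shift nth_Cons_0 nth_Cons_Suc)
  finally show ?case .
qed simp

lemma word_mat_entries_ge:
  assumes "set ds \<subseteq> lehner_digits" "ds \<noteq> []" "word_mat ds = (p,q,s,t)"
  shows "s \<le> p" "1 \<le> s"
proof -
  have "s \<le> p \<and> 1 \<le> s" using assms
  proof (induction ds arbitrary: p q s t)
    case (Cons x xs)
    obtain p1 q1 s1 t1 where m: "word_mat xs = (p1,q1,s1,t1)" by (cases "word_mat xs")
    have "word_mat (x # xs) = (fst x * p1 + snd x * s1, fst x * q1 + snd x * t1, p1, q1)"
      using m by (simp add: digit_mat_def)
    moreover have "xs = [] \<or> s1 \<le> p1 \<and> 1 \<le> s1" using Cons m by auto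
    ultimately show ?case using Cons.prems m by (auto simp: lehner_digits_def)
  qed simp
  then show "s \<le> p" "1 \<le> s" by auto
qed

lemma lehner_map_ge_1: "set ds \<subseteq> lehner_digits \<Longrightarrow> v \<ge> 1 \<Longrightarrow> lehner_map ds v \<ge> 1"
  by (induction ds) (auto intro: lehner_digit_ge_1)

lemma lehner_map_word_mat:
  assumes "set ds \<subseteq> lehner_digits" "v \<ge> 1" "word_mat ds = (p,q,s,t)"
  shows "of_int s * v + of_int t > 0"
    "lehner_map ds v = (of_int p * v + of_int q) / (of_int s * v + of_int t)"
proof -
  have "of_int s * v + of_int t > 0 \<and>
    lehner_map ds v = (of_int p * v + of_int q) / (of_int s * v + of_int t)"
    using assms
  proof (induction ds arbitrary: p q s t)
    case (Cons x xs)
    obtain p1 q1 s1 t1 where m: "word_mat xs = (p1,q1,s1,t1)" by (cases "word_mat xs")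
    with Cons have IH: "of_int s1 * v + of_int t1 > 0"
      "lehner_map xs v = (of_int p1 * v + of_int q1) / (of_int s1 * v + of_int t1)" by auto
    moreover have "lehner_map xs v \<ge> 1" using Cons.prems lehner_map_ge_1 by simp
    ultimately have "of_int p1 * v + of_int q1 > 0" by (simp add: le_divide_eq)
    moreover have "p = fst x * p1 + snd x * s1" "q = fst x * q1 + snd x * t1" "s = p1" "t = q1"
      using Cons.prems(3) m by (auto simp: digit_mat_def)
    ultimately show ?case using IH(2) by (simp add: field_simps)
  qed simp
  then show "of_int s * v + of_int t > 0"
    "lehner_map ds v = (of_int p * v + of_int q) / (of_int s * v + of_int t)" by auto
qed

lemma dual_lehner_map_append: "dual_lehner_map (xs @ ys) u = dual_lehner_map xs (dual_lehner_map ys u)"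
  by (induction xs) auto

lemma dual_lehner_map_word_mat:
  assumes "set ds \<subseteq> lehner_digits" "u > -1" "word_mat ds = (p,q,s,t)"
  shows "of_int s * u + of_int p > 0"
    "dual_lehner_map (rev ds) u = (of_int t * u + of_int q) / (of_int s * u + of_int p)"
proof -
  have "of_int s * u + of_int p > 0 \<and>
    dual_lehner_map (rev ds) u = (of_int t * u + of_int q) / (of_int s * u + of_int p)"
    using assms
  proof (induction ds arbitrary: p q s t u)
    case (Cons x xs)
    obtain p1 q1 s1 t1 where m: "word_mat xs = (p1,q1,s1,t1)" by (cases "word_mat xs")
    define A E where "A = of_int (fst x) + u" and "E = of_int (snd x) / A"
    have "A > 0" using Cons.prems(1,2) by (auto simp: A_def lehner_digits_def)
    have "E > -1" unfolding E_def A_def using dual_lehner_digit_gt_minus_1 Cons.prems by simp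
    with Cons m have IH: "of_int s1 * E + of_int p1 > 0"
      "dual_lehner_map (rev xs) E = (of_int t1 * E + of_int q1) / (of_int s1 * E + of_int p1)" by auto
    have "p = fst x * p1 + snd x * s1" "q = fst x * q1 + snd x * t1" "s = p1" "t = q1"
      using Cons.prems(3) m by (auto simp: digit_mat_def)
    then have "of_int s1 * E + of_int p1 = (of_int s * u + of_int p) / A"
      "of_int t1 * E + of_int q1 = (of_int t * u + of_int q) / A"
      using \<open>A > 0\<close> by (simp_all add: A_def E_def field_simps)
    moreover have "dual_lehner_map (rev (x # xs)) u = dual_lehner_map (rev xs) E"
      by (simp add: dual_lehner_map_append A_def E_def)
    ultimately show ?case using IH \<open>A > 0\<close> by (simp add: zero_less_divide_iff)
  qed simp
  then show "of_int s * u + of_int p > 0"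
    "dual_lehner_map (rev ds) u = (of_int t * u + of_int q) / (of_int s * u + of_int p)" by auto
qed

text \<open>A nonnegative matrix with \<open>a \<le> c\<close>, \<open>b \<le> d\<close> factors as \<open>farey_mat (2,-1)\<close> times
  \<open>(a, b, c - a, d - b)\<close> and as \<open>farey_mat (1,1)\<close> times \<open>(c - a, d - b, a, b)\<close>; unless it is one
  of the two generators, one of these smaller factors is again of the same shape.\<close>
lemma farey_reduction_step:
  fixes a b c d :: int
  assumes "0 \<le> a" "0 \<le> b" "a \<le> c" "b \<le> d" "\<bar>a*d - b*c\<bar> = 1"
    and "(a,b,c,d) \<noteq> (1,0,1,1)" "(a,b,c,d) \<noteq> (0,1,1,1)"
  shows "(a \<le> c - a \<and> b \<le> d - b) \<or> (c - a \<le> a \<and> d - b \<le> b)"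
proof -
  consider "a*(d - b) - b*(c - a) = 1" | "(c - a)*b - (d - b)*a = 1"
    using assms(5) by (auto simp: algebra_simps abs_if split: if_splits)
  then show ?thesis
  proof cases
    case 1
    with assms show ?thesis using sl2_nonneg_comparable[of a b "c - a" "d - b"] by auto
  next
    case 2
    with assms show ?thesis using sl2_nonneg_comparable[of "c - a" "d - b" a b] by auto
  qed
qed

lemma farey_word_exists:
  fixes a b c d :: int
  assumes "0 \<le> a" "0 \<le> b" "a \<le> c" "b \<le> d" "\<bar>a*d - b*c\<bar> = 1"
  shows "\<exists>ds. ds \<noteq> [] \<and> set ds \<subseteq> lehner_digits \<and> farey_word_mat ds = (a,b,c,d)"
  using assms
proof (induction "nat (a + b + c + d)" arbitrary: a b c d rule: less_induct)
  case less
  have digits: "(2,-1) \<in> lehner_digits" "(1,1) \<in> lehner_digits" by (simp_all add: lehner_digits_def)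
  have "a + b > 0"
  proof (rule ccontr)
    assume "\<not> a + b > 0"
    then have "a = 0" "b = 0" using less.prems(1,2) by auto
    then show False using less.prems(5) by simp
  qed
  have peel_first: ?case if le: "a \<le> c - a" "b \<le> d - b"
  proof -
    have "\<bar>a*(d - b) - b*(c - a)\<bar> = 1" using less.prems(5) by (simp add: algebra_simps)
    then obtain ds where "ds \<noteq> []" "set ds \<subseteq> lehner_digits" "farey_word_mat ds = (a, b, c - a, d - b)"
      using less.hyps[of a b "c - a" "d - b"] less.prems \<open>a + b > 0\<close> le by fastforce
    then show ?thesis using digits by (intro exI[of _ "(2,-1) # ds"]) (simp add: farey_mat_def)
  qed
  have peel_second: ?case if le: "c - a \<le> a" "d - b \<le> b"
  proof -
    have "\<bar>(c - a)*b - (d - b)*a\<bar> = 1"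
      using less.prems(5) by (simp add: algebra_simps abs_minus_commute)
    then obtain ds where "ds \<noteq> []" "set ds \<subseteq> lehner_digits" "farey_word_mat ds = (c - a, d - b, a, b)"
      using less.hyps[of "c - a" "d - b" a b] less.prems \<open>a + b > 0\<close> le by fastforce
    then show ?thesis using digits by (intro exI[of _ "(1,1) # ds"]) (simp add: farey_mat_def)
  qed
  show ?case
  proof (cases "(a,b,c,d) = (1,0,1,1) \<or> (a,b,c,d) = (0,1,1,1)")
    case True
    then show ?thesis
    proof
      assume "(a,b,c,d) = (1,0,1,1)"
      then show ?thesis using digits by (intro exI[of _ "[(2,-1)]"]) (simp add: farey_mat_def)
    next
      assume "(a,b,c,d) = (0,1,1,1)"
      then show ?thesis using digits by (intro exI[of _ "[(1,1)]"]) (simp add: farey_mat_def)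
    qed
  next
    case False
    then show ?thesis using farey_reduction_step[OF less.prems] peel_first peel_second by blast
  qed
qed

lemma translates_axis_word_form:
  assumes "translates_axis P N l"
  shows "\<exists>ds \<alpha> \<beta> \<gamma> \<delta>. sl2z_conj P N (word_mat ds) (\<alpha>,\<beta>,\<gamma>,\<delta>) \<and>
    translates_axis (word_mat ds) (\<alpha>,\<beta>,\<gamma>,\<delta>) l \<and> ds \<noteq> [] \<and> set ds \<subseteq> lehner_digits \<and>
    1 < \<alpha>/\<gamma> \<and> \<alpha>/\<gamma> < 2 \<and> \<beta>/\<delta> < 1"
proof -
  obtain a b c d \<alpha> \<beta> \<gamma> \<delta> where C: "sl2z_conj P N (a,b,c,d) (\<alpha>,\<beta>,\<gamma>,\<delta>)"
    and T: "translates_axis (a,b,c,d) (\<alpha>,\<beta>,\<gamma>,\<delta>) l"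
    and "0 \<le> a" "0 \<le> b" "a \<le> c" "b \<le> d" and x: "0 < \<alpha>/\<gamma>" "\<alpha>/\<gamma> < 1" and y: "\<beta>/\<delta> < 0"
    using translates_axis_normal_form[OF assms] by blast
  moreover have "\<bar>a*d - b*c\<bar> = 1" using T by (simp add: translates_axis_def)
  ultimately obtain ds where ds: "ds \<noteq> []" "set ds \<subseteq> lehner_digits" "farey_word_mat ds = (a,b,c,d)"
    using farey_word_exists by blast
  have "\<gamma> \<noteq> 0" "\<delta> \<noteq> 0" using translates_axis_nondegenerate[OF T] by auto
  have C': "sl2z_conj P N (word_mat ds) (\<alpha> + \<gamma>, \<beta> + \<delta>, \<gamma>, \<delta>)"
    using sl2z_conj_trans[OF C sl2z_conjI[of "(1,1,0,1)"]] word_mat_eq_conj[OF ds(2)] ds(3) by simp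
  moreover have "translates_axis (word_mat ds) (\<alpha> + \<gamma>, \<beta> + \<delta>, \<gamma>, \<delta>) l"
    using sl2z_conj_translates_axis[OF C' assms] .
  moreover have "(\<alpha> + \<gamma>)/\<gamma> = \<alpha>/\<gamma> + 1" "(\<beta> + \<delta>)/\<delta> = \<beta>/\<delta> + 1"
    using \<open>\<gamma> \<noteq> 0\<close> \<open>\<delta> \<noteq> 0\<close> by (simp_all add: field_simps)
  ultimately show ?thesis using ds x y
    by (intro exI[of _ ds] exI[of _ "\<alpha> + \<gamma>"] exI[of _ "\<beta> + \<delta>"] exI[of _ \<gamma>] exI[of _ \<delta>]) simp
qed

section \<open>Purely periodic Lehner expansions\<close>

definition cycle :: "'a list \<Rightarrow> nat \<Rightarrow> 'a" where
  "cycle xs i = xs ! (i mod length xs)"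

text \<open>The digits of the backward endpoint: the period read backwards, each Lehner digit
  \<open>(a,\<epsilon>)\<close> entering \<open>fconv\<close> as the pair \<open>(\<epsilon>, a)\<close>.\<close>
definition dual_cycle :: "(int \<times> int) list \<Rightarrow> nat \<Rightarrow> int \<times> int" where
  "dual_cycle ds j = (snd (ds ! (length ds - 1 - j mod length ds)),
                      fst (ds ! (length ds - 1 - j mod length ds)))"

lemma cycle_in_set: "xs \<noteq> [] \<Longrightarrow> cycle xs i \<in> set xs"
  by (simp add: cycle_def)

lemma dual_cycle_in_set: "ds \<noteq> [] \<Longrightarrow> (snd (dual_cycle ds j), fst (dual_cycle ds j)) \<in> set ds"
  by (simp add: dual_cycle_def)

lemma lconv_ge_1: "(\<And>i. d i \<in> lehner_digits) \<Longrightarrow> lconv d n \<ge> 1"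
proof (induction n arbitrary: d)
  case 0
  have "d 0 \<in> lehner_digits" by (rule "0.prems")
  then show ?case by (auto simp: lehner_digits_def)
qed (simp add: lehner_digit_ge_1)

lemma fconv_gt_minus_1: "(\<And>i. (snd (e i), fst (e i)) \<in> lehner_digits) \<Longrightarrow> fconv e n > -1"
proof (induction n arbitrary: e)
  case 0
  have "(snd (e 0), fst (e 0)) \<in> lehner_digits" by (rule "0.prems")
  then show ?case by (auto simp: lehner_digits_def)
next
  case (Suc n)
  have "fconv (\<lambda>i. e (Suc i)) n > -1" using Suc by simp
  then show ?case using dual_lehner_digit_gt_minus_1[OF Suc.prems[of 0]] by simp
qed

lemma lconv_shift:
  "(\<And>i. i < length xs \<Longrightarrow> d i = xs ! i) \<Longrightarrow>
    lconv d (n + length xs) = lehner_map xs (lconv (\<lambda>i. d (i + length xs)) n)"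
proof (induction xs arbitrary: d)
  case (Cons x xs)
  from Cons.prems have "lconv (\<lambda>i. d (Suc i)) (n + length xs)
      = lehner_map xs (lconv (\<lambda>i. d (Suc (i + length xs))) n)"
    using Cons.IH[of "\<lambda>i. d (Suc i)"] by fastforce
  with Cons.prems[of 0] show ?case by simp
qed simp

lemma fconv_shift:
  "(\<And>i. i < length xs \<Longrightarrow> e i = (snd (xs ! i), fst (xs ! i))) \<Longrightarrow>
    fconv e (n + length xs) = dual_lehner_map xs (fconv (\<lambda>i. e (i + length xs)) n)"
proof (induction xs arbitrary: e)
  case (Cons x xs)
  from Cons.prems have "fconv (\<lambda>i. e (Suc i)) (n + length xs)
      = dual_lehner_map xs (fconv (\<lambda>i. e (Suc (i + length xs))) n)"
    using Cons.IH[of "\<lambda>i. e (Suc i)"] by fastforce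
  with Cons.prems[of 0] show ?case by simp
qed simp

lemma lconv_cycle_step:
  "ds \<noteq> [] \<Longrightarrow> lconv (cycle ds) (n + length ds) = lehner_map ds (lconv (cycle ds) n)"
proof -
  assume "ds \<noteq> []"
  have "\<And>i. i < length ds \<Longrightarrow> cycle ds i = ds ! i" by (simp add: cycle_def)
  moreover have "(\<lambda>i. cycle ds (i + length ds)) = cycle ds" by (rule ext) (simp add: cycle_def)
  ultimately show ?thesis using lconv_shift[of ds "cycle ds" n] by simp
qed

lemma fconv_dual_cycle_step:
  assumes "ds \<noteq> []"
  shows "fconv (dual_cycle ds) (n + length ds) = dual_lehner_map (rev ds) (fconv (dual_cycle ds) n)"
proof -
  have "dual_cycle ds i = (snd (rev ds ! i), fst (rev ds ! i))" if "i < length (rev ds)" for i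
    using that assms by (simp add: dual_cycle_def rev_nth)
  moreover have "(\<lambda>i. dual_cycle ds (i + length ds)) = dual_cycle ds"
    by (rule ext) (simp add: dual_cycle_def)
  ultimately show ?thesis using fconv_shift[of "rev ds" "dual_cycle ds" n] by simp
qed

lemma filterlim_div_sequentially:
  assumes "r > (0::nat)"
  shows "filterlim (\<lambda>n. n div r) sequentially sequentially"
  unfolding filterlim_at_top eventually_sequentially
proof (intro allI exI impI)
  fix Z n :: nat
  assume "Z * r \<le> n"
  then have "Z * r div r \<le> n div r" by (rule div_le_mono)
  then show "Z \<le> n div r" using assms by simp
qed

lemma periodic_contraction_tendsto:
  fixes z :: "nat \<Rightarrow> real"
  assumes r: "r \<ge> 1" and step: "\<And>n. z (n + r) = F (z n)" and "\<And>n. z n \<in> I"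
    and contr: "\<And>v. v \<in> I \<Longrightarrow> \<bar>F v - L\<bar> \<le> \<bar>v - L\<bar> / \<kappa>" and "\<kappa> > 1"
  shows "z \<longlonglongrightarrow> L"
proof -
  define C where "C = (\<Sum>j<r. \<bar>z j - L\<bar>)"
  have bound: "\<bar>z n - L\<bar> \<le> C * (1/\<kappa>)^(n div r)" for n
  proof (induction n rule: less_induct)
    case (less n)
    show ?case
    proof (cases "n < r")
      case True
      then have "\<bar>z n - L\<bar> \<le> C" unfolding C_def by (intro member_le_sum) auto
      then show ?thesis using True by simp
    next
      case False
      then obtain m where n: "n = m + r" by (metis add.commute le_add_diff_inverse not_less)
      have "\<bar>z n - L\<bar> \<le> \<bar>z m - L\<bar> / \<kappa>" using contr assms(3) step n by simp
      also have "\<dots> \<le> C * (1/\<kappa>)^(m div r) / \<kappa>"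
        using less.IH[of m] n r \<open>\<kappa> > 1\<close> by (simp add: divide_right_mono)
      also have "\<dots> = C * (1/\<kappa>)^(n div r)"
        using n r by (simp add: field_simps)
      finally show ?thesis .
    qed
  qed
  have "norm (1/\<kappa>) < 1" using \<open>\<kappa> > 1\<close> by simp
  then have "(\<lambda>n. (1/\<kappa>)^(n div r)) \<longlonglongrightarrow> 0"
    by (rule filterlim_compose[OF LIMSEQ_power_zero filterlim_div_sequentially]) (use r in simp)
  then have "(\<lambda>n. C * (1/\<kappa>)^(n div r)) \<longlonglongrightarrow> 0" by (rule tendsto_mult_right_zero)
  then have "(\<lambda>n. z n - L) \<longlonglongrightarrow> 0"
    by (rule Lim_null_comparison[rotated]) (use bound in auto)
  then show ?thesis by (rule LIM_zero_cancel)
qed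

lemma periodic_limit_fixed_point:
  fixes z :: "nat \<Rightarrow> real"
  assumes "\<And>n. z (n + r) = F (z n)" "z \<longlonglongrightarrow> X" "isCont F X"
  shows "F X = X"
proof -
  have "(\<lambda>n. F (z n)) \<longlonglongrightarrow> X"
    using LIMSEQ_ignore_initial_segment[OF assms(2), of r] assms(1) by simp
  moreover have "(\<lambda>n. F (z n)) \<longlonglongrightarrow> F X" using isCont_tendsto_compose[OF assms(3,2)] .
  ultimately show ?thesis using LIMSEQ_unique by blast
qed

text \<open>With \<open>p - s x = 1/l\<close> the map moves \<open>w\<close> towards its fixed point \<open>x\<close> by the factor
  \<open>1/(l (s w + t))\<close>.\<close>
lemma moeb_real_fixed_point_contraction:
  fixes p q s t x w l \<kappa> :: real
  assumes "p*x + q = x*(s*x + t)" "p - s*x = 1/l" "l > 0" "0 < \<kappa>" "\<kappa> \<le> l*(s*w + t)"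
  shows "\<bar>(p*w + q)/(s*w + t) - x\<bar> \<le> \<bar>w - x\<bar> / \<kappa>"
proof -
  have "l*(s*w + t) > 0" using assms(4,5) by linarith
  then have "s*w + t > 0" using assms(3) by (simp add: zero_less_mult_iff)
  then have "(p*w + q)/(s*w + t) - x = (w - x)*(p - s*x) / (s*w + t)"
    using assms(1) by (simp add: field_simps)
  then have "(p*w + q)/(s*w + t) - x = (w - x) / (l*(s*w + t))"
    using assms(2) by simp
  then have "\<bar>(p*w + q)/(s*w + t) - x\<bar> = \<bar>w - x\<bar> / (l*(s*w + t))"
    using \<open>s*w + t > 0\<close> assms(3) by (simp add: abs_divide)
  also have "\<dots> \<le> \<bar>w - x\<bar> / \<kappa>" using assms(4,5) by (intro divide_left_mono) auto
  finally show ?thesis .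
qed

lemma lconv_cycle_tendsto:
  assumes ds: "set ds \<subseteq> lehner_digits" "ds \<noteq> []"
    and T: "translates_axis (word_mat ds) (\<alpha>,\<beta>,\<gamma>,\<delta>) l" and "\<beta>/\<delta> < 1"
  shows "lconv (cycle ds) \<longlonglongrightarrow> \<alpha>/\<gamma>"
proof -
  obtain p q s t where W: "word_mat ds = (p,q,s,t)" by (cases "word_mat ds")
  define x y where "x = \<alpha>/\<gamma>" "y = \<beta>/\<delta>"
  note fp = translates_axis_fixed_points[OF T[unfolded W] x_y_def]
  have "1 \<le> s" using word_mat_entries_ge[OF ds W] by simp
  have "l > 1" using T by (simp add: translates_axis_def)
  have fixed: "of_int p * x + of_int q = x * (of_int s * x + of_int t)" using fp(1,2) by simp
  have "of_int p - of_int s * x = 1/l"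
    using fp(1) translates_axis_trace(1)[OF T[unfolded W]] by simp
  define \<kappa> where "\<kappa> = l * (of_int s + of_int t)"
  have "y < 1" using \<open>\<beta>/\<delta> < 1\<close> x_y_def by simp
  then have "of_int s * y < of_int s" using \<open>1 \<le> s\<close> by simp
  then have "of_int s + of_int t > 1/l" using fp(3) by linarith
  then have "\<kappa> > 1" unfolding \<kappa>_def using \<open>l > 1\<close> by (simp add: field_simps)
  show ?thesis unfolding x_y_def[symmetric]
  proof (rule periodic_contraction_tendsto[where I = "{v. v \<ge> 1}" and r = "length ds"])
    show "lconv (cycle ds) n \<in> {v. v \<ge> 1}" for n
      using lconv_ge_1 cycle_in_set ds by blast
    show "\<bar>lehner_map ds v - x\<bar> \<le> \<bar>v - x\<bar> / \<kappa>" if "v \<in> {v. v \<ge> 1}" for v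
    proof -
      have "of_int s * 1 \<le> of_int s * v" using that \<open>1 \<le> s\<close> by (intro mult_left_mono) auto
      then have "\<kappa> \<le> l * (of_int s * v + of_int t)" unfolding \<kappa>_def using \<open>l > 1\<close> by simp
      then show ?thesis
        using moeb_real_fixed_point_contraction[OF fixed \<open>of_int p - of_int s * x = 1/l\<close>]
          lehner_map_word_mat(2)[OF ds(1) _ W] that \<open>l > 1\<close> \<open>\<kappa> > 1\<close> by simp
    qed
  qed (use ds lconv_cycle_step \<open>\<kappa> > 1\<close> in \<open>auto simp: Suc_le_eq\<close>)
qed

lemma fconv_dual_cycle_tendsto:
  assumes ds: "set ds \<subseteq> lehner_digits" "ds \<noteq> []"
    and T: "translates_axis (word_mat ds) (\<alpha>,\<beta>,\<gamma>,\<delta>) l" and "1 < \<alpha>/\<gamma>"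
  shows "fconv (dual_cycle ds) \<longlonglongrightarrow> - (\<beta>/\<delta>)"
proof -
  obtain p q s t where W: "word_mat ds = (p,q,s,t)" by (cases "word_mat ds")
  define x y where "x = \<alpha>/\<gamma>" "y = \<beta>/\<delta>"
  note fp = translates_axis_fixed_points[OF T[unfolded W] x_y_def]
  have "1 \<le> s" using word_mat_entries_ge[OF ds W] by simp
  have "l > 1" using T by (simp add: translates_axis_def)
  have "y * (of_int s * y + of_int t) = y / l" using fp(3) by simp
  then have fixed: "of_int t * (-y) + of_int q = (-y) * (of_int s * (-y) + of_int p)"
    using fp(4) by (simp add: algebra_simps)
  have "of_int t - of_int s * (-y) = 1/l" using fp(3) by simp
  define \<kappa> where "\<kappa> = l * (of_int p - of_int s)"
  have "1 < x" using \<open>1 < \<alpha>/\<gamma>\<close> x_y_def by simp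
  then have "of_int s < of_int s * x" using \<open>1 \<le> s\<close> by simp
  moreover have "of_int p - of_int s * x = 1/l"
    using fp(1) translates_axis_trace(1)[OF T[unfolded W]] by simp
  ultimately have "of_int p - of_int s > 1/l" by linarith
  then have "\<kappa> > 1" unfolding \<kappa>_def using \<open>l > 1\<close> by (simp add: field_simps)
  show ?thesis unfolding x_y_def[symmetric]
  proof (rule periodic_contraction_tendsto[where I = "{u. u > -1}" and r = "length ds"])
    show "fconv (dual_cycle ds) n \<in> {u. u > -1}" for n
      using fconv_gt_minus_1 dual_cycle_in_set ds by blast
    show "\<bar>dual_lehner_map (rev ds) u - (-y)\<bar> \<le> \<bar>u - (-y)\<bar> / \<kappa>" if "u \<in> {u. u > -1}" for u
    proof -
      have "of_int s * (-1) \<le> of_int s * u" using that \<open>1 \<le> s\<close> by (intro mult_left_mono) auto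
      then have "\<kappa> \<le> l * (of_int s * u + of_int p)" unfolding \<kappa>_def using \<open>l > 1\<close> by simp
      then show ?thesis
        using moeb_real_fixed_point_contraction[OF fixed \<open>of_int t - of_int s * (-y) = 1/l\<close>]
          dual_lehner_map_word_mat(2)[OF ds(1) _ W] that \<open>l > 1\<close> \<open>\<kappa> > 1\<close> by simp
    qed
  qed (use ds fconv_dual_cycle_step \<open>\<kappa> > 1\<close> in \<open>auto simp: Suc_le_eq\<close>)
qed

lemma lconv_cycle_limit_fixed_point:
  assumes ds: "set ds \<subseteq> lehner_digits" "ds \<noteq> []" and W: "word_mat ds = (p,q,s,t)"
    and lim: "lconv (cycle ds) \<longlonglongrightarrow> X"
  shows "1 \<le> X" "of_int p * X + of_int q = X * (of_int s * X + of_int t)"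
proof -
  have ge: "lconv (cycle ds) n \<ge> 1" for n using lconv_ge_1 cycle_in_set ds by blast
  then show "1 \<le> X" using LIMSEQ_le_const[OF lim] by blast
  then have pos: "of_int s * X + of_int t > 0" using lehner_map_word_mat(1)[OF ds(1) _ W] by blast
  have "(\<lambda>v. (of_int p * v + of_int q) / (of_int s * v + of_int t)) X = X"
  proof (rule periodic_limit_fixed_point[OF _ lim])
    show "lconv (cycle ds) (n + length ds) =
        (of_int p * lconv (cycle ds) n + of_int q) / (of_int s * lconv (cycle ds) n + of_int t)" for n
      using lconv_cycle_step[OF ds(2)] lehner_map_word_mat(2)[OF ds(1) ge W] by simp
  qed (use pos in \<open>intro continuous_intros; simp\<close>)
  then show "of_int p * X + of_int q = X * (of_int s * X + of_int t)"
    using pos by (simp add: field_simps)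
qed

lemma fconv_dual_cycle_limit_fixed_point:
  assumes ds: "set ds \<subseteq> lehner_digits" "ds \<noteq> []" and W: "word_mat ds = (p,q,s,t)"
    and lim: "fconv (dual_cycle ds) \<longlonglongrightarrow> U" and "U > -1"
  shows "U * (of_int s * U + of_int p) = of_int t * U + of_int q"
proof -
  have gt: "fconv (dual_cycle ds) n > -1" for n using fconv_gt_minus_1 dual_cycle_in_set ds by blast
  have pos: "of_int s * U + of_int p > 0" using dual_lehner_map_word_mat(1)[OF ds(1) \<open>U > -1\<close> W] .
  have "(\<lambda>u. (of_int t * u + of_int q) / (of_int s * u + of_int p)) U = U"
  proof (rule periodic_limit_fixed_point[OF _ lim])
    show "fconv (dual_cycle ds) (n + length ds) = (of_int t * fconv (dual_cycle ds) n + of_int q) /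
        (of_int s * fconv (dual_cycle ds) n + of_int p)" for n
      using fconv_dual_cycle_step[OF ds(2)] dual_lehner_map_word_mat(2)[OF ds(1) gt W] by simp
  qed (use pos in \<open>intro continuous_intros; simp\<close>)
  then show ?thesis using pos by (simp add: field_simps)
qed

section \<open>Closed geodesics\<close>

lemma geod_translated_by_diag_conj:
  assumes N: "mat_det N = (1::real)" and V: "mat_det V = 1"
    and VN: "mat_mult (of_int_mat V) N = mat_mult N (l,0,0,m)" and "l * m = 1" and "l^2 > 1"
  shows "geod N (t + ln (l^2)) = moeb (of_int_mat V) (geod N t)"
proof -
  let ?z = "\<i> * of_real (exp t) :: complex"
  have "Im ?z > 0" by simp
  have "l \<noteq> 0" using \<open>l * m = 1\<close> by auto
  then have "m = 1/l" using \<open>l * m = 1\<close> by (simp add: field_simps)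
  have "exp (ln (l^2)) = l^2" using \<open>l \<noteq> 0\<close> by simp
  then have "moeb (l,0,0,m) ?z = \<i> * of_real (exp (t + ln (l^2)))"
    unfolding \<open>m = 1/l\<close> using \<open>l \<noteq> 0\<close> by (simp add: moeb_simp exp_add field_simps power2_eq_square)
  moreover have "moeb (of_int_mat V) (geod N t) = moeb (mat_mult N (l,0,0,m)) ?z"
    using moeb_mat_mult[OF \<open>Im ?z > 0\<close>] N V by (simp add: VN[symmetric])
  moreover have "moeb (mat_mult N (l,0,0,m)) ?z = moeb N (moeb (l,0,0,m) ?z)"
    using moeb_mat_mult[OF \<open>Im ?z > 0\<close>, of "(l,0,0,m)" N] N \<open>l * m = 1\<close> by simp
  ultimately show ?thesis by simp
qed

lemma diag_conj_eigenvalue_sq_ne_1: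
  assumes N: "mat_det N = (1::real)" and "V = (a,b,c,d)" "c \<noteq> 0"
    and VN: "mat_mult (of_int_mat V) N = mat_mult N (l,0,0,m)" and "l * m = 1"
  shows "l^2 \<noteq> 1"
proof
  obtain \<alpha> \<beta> \<gamma> \<delta> where N_def: "N = (\<alpha>,\<beta>,\<gamma>,\<delta>)" by (cases N)
  assume "l^2 = 1"
  then have "m = l" using \<open>l * m = 1\<close> by (auto simp: power2_eq_1_iff)
  with VN have e: "of_int c * \<alpha> + of_int d * \<gamma> = \<gamma> * l" "of_int c * \<beta> + of_int d * \<delta> = \<delta> * l"
    unfolding assms(2) N_def by auto
  have "of_int c * (\<alpha>*\<delta> - \<beta>*\<gamma>)
      = (of_int c * \<alpha> + of_int d * \<gamma>) * \<delta> - (of_int c * \<beta> + of_int d * \<delta>) * \<gamma>"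
    by (simp add: algebra_simps)
  also have "\<dots> = 0" unfolding e by simp
  finally show False using N assms(3) unfolding N_def by simp
qed

lemma diag_conj_adj:
  assumes "mat_det V = 1" and VN: "mat_mult (of_int_mat V) N = mat_mult N (l,0,0,m)" and "l * m = (1::real)"
  shows "mat_mult (of_int_mat (mat_adj V)) N = mat_mult N (m,0,0,l)"
proof -
  let ?V = "of_int_mat V"
  have "mat_mult (l,0,0,m) (m,0,0,l) = (1,0,0,1)" using \<open>l * m = 1\<close> by (simp add: mult.commute)
  then have "mat_mult (mat_adj ?V) N = mat_mult (mat_mult (mat_adj ?V) (mat_mult N (l,0,0,m))) (m,0,0,l)"
    by (simp add: mat_mult_assoc)
  also have "\<dots> = mat_mult (mat_mult (mat_mult (mat_adj ?V) ?V) N) (m,0,0,l)"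
    by (simp only: VN mat_mult_assoc)
  also have "\<dots> = mat_mult N (m,0,0,l)" using mat_adj_mult[of ?V] assms(1) by simp
  finally show ?thesis by (simp only: of_int_mat_adj)
qed

lemma closed_geod_of_diag_conj:
  assumes N: "mat_det N = (1::real)" and V: "mat_det V = 1" "V = (a,b,c,d)" "c \<noteq> 0"
    and VN: "mat_mult (of_int_mat V) N = mat_mult N (l,0,0,m)" and "l * m = 1"
  shows "closed_on_M (geod N)"
proof -
  have closed_if: "closed_on_M (geod N)"
    if "mat_det W = 1" "mat_mult (of_int_mat W) N = mat_mult N (u,0,0,v)" "u * v = 1" "u^2 > 1" for W u v
    unfolding closed_on_M_def
    using geod_translated_by_diag_conj[OF N that] that(1) ln_gt_zero[OF \<open>u^2 > 1\<close>]
    by (intro exI[of _ "ln (u^2)"] bexI[of _ W]) (auto simp: SL2Z_iff_det)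
  have "l \<noteq> 0" using \<open>l * m = 1\<close> by auto
  consider "l^2 > 1" | "l^2 < 1" using diag_conj_eigenvalue_sq_ne_1[OF N V(2,3) VN \<open>l * m = 1\<close>] by linarith
  then show ?thesis
  proof cases
    case 1
    then show ?thesis using closed_if[OF V(1) VN \<open>l * m = 1\<close>] by blast
  next
    case 2
    moreover have "m^2 = 1 / l^2" using \<open>l * m = 1\<close> \<open>l \<noteq> 0\<close> by (simp add: field_simps power2_eq_square)
    ultimately have "m^2 > 1" using \<open>l \<noteq> 0\<close> by simp
    then show ?thesis using closed_if[OF _ diag_conj_adj[OF V(1) VN \<open>l * m = 1\<close>]] V(1) \<open>l * m = 1\<close>
      by (simp add: mult.commute)
  qed
qed

lemma mat_mult_eigen_columns:
  fixes p q s t \<alpha> \<beta> \<gamma> \<delta> :: real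
  assumes "\<gamma> \<noteq> 0" "\<delta> \<noteq> 0"
    and "p * (\<alpha>/\<gamma>) + q = (\<alpha>/\<gamma>) * (s * (\<alpha>/\<gamma>) + t)" "p * (\<beta>/\<delta>) + q = (\<beta>/\<delta>) * (s * (\<beta>/\<delta>) + t)"
  shows "mat_mult (p,q,s,t) (\<alpha>,\<beta>,\<gamma>,\<delta>) = mat_mult (\<alpha>,\<beta>,\<gamma>,\<delta>) (s * (\<alpha>/\<gamma>) + t, 0, 0, s * (\<beta>/\<delta>) + t)"
proof -
  define x y where "x = \<alpha>/\<gamma>" "y = \<beta>/\<delta>"
  have "\<alpha> = x*\<gamma>" "\<beta> = y*\<delta>" using assms(1,2) unfolding x_y_def by simp_all
  moreover have "\<gamma>*(p*x + q) = \<gamma>*(x*(s*x + t))" "\<delta>*(p*y + q) = \<delta>*(y*(s*y + t))"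
    using assms(3,4) unfolding x_y_def by simp_all
  ultimately show ?thesis by (simp add: algebra_simps)
qed

lemma moeb_geod:
  "mat_det H = 1 \<Longrightarrow> mat_det g = 1 \<Longrightarrow> moeb (of_int_mat g) (geod H t) = geod (mat_mult (of_int_mat g) H) t"
  by (rule moeb_mat_mult) simp_all

lemma closed_on_M_of_moeb:
  assumes "closed_on_M (\<lambda>t. moeb (of_int_mat g) (\<gamma> t))" "g \<in> SL2Z" "\<And>t. Im (\<gamma> t) > 0"
  shows "closed_on_M \<gamma>"
proof -
  let ?G = "of_int_mat g"
  obtain T v where "T > 0" "v \<in> SL2Z" and per: "\<And>t. moeb ?G (\<gamma> (t + T)) = moeb (of_int_mat v) (moeb ?G (\<gamma> t))"
    using assms(1) unfolding closed_on_M_def by blast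
  have G: "mat_det ?G = 1" "mat_det (of_int_mat v) = 1" using assms(2) \<open>v \<in> SL2Z\<close> by (simp_all add: SL2Z_iff_det)
  have "\<gamma> (t + T) = moeb (of_int_mat (mat_mult (mat_adj g) (mat_mult v g))) (\<gamma> t)" for t
  proof -
    have "\<gamma> (t + T) = moeb (mat_adj ?G) (moeb ?G (\<gamma> (t + T)))" using moeb_adj_moeb[OF assms(3) G(1)] by simp
    also have "\<dots> = moeb (mat_adj ?G) (moeb (of_int_mat v) (moeb ?G (\<gamma> t)))" by (simp only: per)
    also have "\<dots> = moeb (of_int_mat (mat_mult (mat_adj g) (mat_mult v g))) (\<gamma> t)"
      using assms(3) G by (simp add: moeb_mat_mult Im_moeb_pos mat_det_mult of_int_mat_mult of_int_mat_adj)
    finally show ?thesis .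
  qed
  moreover have "mat_mult (mat_adj g) (mat_mult v g) \<in> SL2Z"
    using assms(2) \<open>v \<in> SL2Z\<close> by (simp add: SL2Z_iff_det mat_det_mult)
  ultimately show ?thesis unfolding closed_on_M_def using \<open>T > 0\<close> by blast
qed

definition lehner_coded :: "real \<Rightarrow> real \<Rightarrow> bool" where
  "lehner_coded x y \<longleftrightarrow>
     (\<exists>(\<epsilon>::real) (r::nat) (ds::(int \<times> int) list).
        \<epsilon> \<in> {-1, 1} \<and> r \<ge> 1 \<and> length ds = r \<and>
        set ds \<subseteq> {(2, -1), (1, 1)} \<and>
        (\<Prod>i<r. - snd (ds ! i)) = 1 \<and>
        (\<lambda>n. \<epsilon> * lconv (\<lambda>i. ds ! (i mod r)) n) \<longlonglongrightarrow> x \<and>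
        (\<lambda>n. - \<epsilon> * fconv (\<lambda>j. (snd (ds ! (r - 1 - j mod r)), fst (ds ! (r - 1 - j mod r)))) n)
           \<longlonglongrightarrow> y)"

lemma lehner_coded_iff:
  "lehner_coded x y \<longleftrightarrow> (\<exists>\<epsilon> ds. \<epsilon> \<in> {-1, 1} \<and> ds \<noteq> [] \<and> set ds \<subseteq> lehner_digits \<and>
     mat_det (word_mat ds) = 1 \<and> (\<lambda>n. \<epsilon> * lconv (cycle ds) n) \<longlonglongrightarrow> x \<and>
     (\<lambda>n. - \<epsilon> * fconv (dual_cycle ds) n) \<longlonglongrightarrow> y)"
  unfolding lehner_coded_def mat_det_word_mat lehner_digits_def cycle_def[abs_def] dual_cycle_def[abs_def]
  by (auto simp: Suc_le_eq)

lemma closed_geod_coded_lift: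
  assumes H: "mat_det H = 1" and "closed_on_M (geod H)"
  shows "\<exists>g\<in>SL2Z. \<exists>x y. ((\<lambda>t. moeb (of_int_mat g) (geod H t)) \<longlongrightarrow> of_real x) at_top \<and>
    ((\<lambda>t. moeb (of_int_mat g) (geod H t)) \<longlongrightarrow> of_real y) at_bot \<and> (x, y) \<in> S_set \<and> lehner_coded x y"
proof -
  obtain T g where "T > 0" "g \<in> SL2Z" and per: "\<And>t. geod H (t + T) = moeb (of_int_mat g) (geod H t)"
    using assms(2) unfolding closed_on_M_def by blast
  then obtain P l where "translates_axis P H l"
    using closed_geod_translates_axis[OF H \<open>T > 0\<close> _ per] by (auto simp: SL2Z_iff_det)
  then obtain ds \<alpha> \<beta> \<gamma> \<delta> where C: "sl2z_conj P H (word_mat ds) (\<alpha>,\<beta>,\<gamma>,\<delta>)"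
    and T: "translates_axis (word_mat ds) (\<alpha>,\<beta>,\<gamma>,\<delta>) l" and ds: "ds \<noteq> []" "set ds \<subseteq> lehner_digits"
    and x: "1 < \<alpha>/\<gamma>" "\<alpha>/\<gamma> < 2" and y: "\<beta>/\<delta> < 1"
    using translates_axis_word_form by blast
  from C obtain k where k: "mat_det k = 1" "(\<alpha>,\<beta>,\<gamma>,\<delta>) = mat_mult (of_int_mat k) H"
    unfolding sl2z_conj_def by blast
  have lift: "(\<lambda>t. moeb (of_int_mat k) (geod H t)) = geod (\<alpha>,\<beta>,\<gamma>,\<delta>)"
    using moeb_geod[OF H k(1)] k(2) by simp
  obtain p q s t where "word_mat ds = (p,q,s,t)" by (cases "word_mat ds")
  with T have T': "translates_axis (p,q,s,t) (\<alpha>,\<beta>,\<gamma>,\<delta>) l" by simp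
  then have det: "\<alpha>*\<delta> - \<beta>*\<gamma> = 1" by (simp add: translates_axis_def)
  note nz = translates_axis_nondegenerate(2,3)[OF T']
  have "(geod (\<alpha>,\<beta>,\<gamma>,\<delta>) \<longlongrightarrow> of_real (\<alpha>/\<gamma>)) at_top" "(geod (\<alpha>,\<beta>,\<gamma>,\<delta>) \<longlongrightarrow> of_real (\<beta>/\<delta>)) at_bot"
    using geod_tendsto_at_top_iff[OF det] geod_tendsto_at_bot_iff[OF det] nz by blast+
  moreover have "(\<alpha>/\<gamma>, \<beta>/\<delta>) \<in> S_set" using x y by (simp add: S_set_def)
  moreover have "lehner_coded (\<alpha>/\<gamma>) (\<beta>/\<delta>)"
  proof -
    have "(\<lambda>n. 1 * lconv (cycle ds) n) \<longlonglongrightarrow> \<alpha>/\<gamma>" using lconv_cycle_tendsto[OF ds(2,1) T y] by simp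
    moreover have "(\<lambda>n. - 1 * fconv (dual_cycle ds) n) \<longlonglongrightarrow> \<beta>/\<delta>"
      using tendsto_minus[OF fconv_dual_cycle_tendsto[OF ds(2,1) T x(1)]] by simp
    moreover have "mat_det (word_mat ds) = 1" using T by (simp add: translates_axis_def)
    ultimately show ?thesis unfolding lehner_coded_iff using ds by blast
  qed
  moreover have "k \<in> SL2Z" using k(1) by (simp add: SL2Z_iff_det)
  ultimately show ?thesis by (intro bexI[of _ k] exI[of _ "\<alpha>/\<gamma>"] exI[of _ "\<beta>/\<delta>"]) (simp_all only: lift)
qed

lemma S_set_sign_bound:
  assumes "(x, y) \<in> S_set" "\<epsilon> \<in> {-1, 1}" "1 \<le> \<epsilon> * x"
  shows "-1 < - \<epsilon> * y"
  using assms by (auto simp: S_set_def)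

lemma coded_endpoints_closed_geod:
  assumes N: "mat_det N = 1"
    and top: "(geod N \<longlongrightarrow> of_real x) at_top" and bot: "(geod N \<longlongrightarrow> of_real y) at_bot"
    and "(x, y) \<in> S_set" and "lehner_coded x y"
  shows "closed_on_M (geod N)"
proof -
  obtain \<alpha> \<beta> \<gamma> \<delta> where N_def: "N = (\<alpha>,\<beta>,\<gamma>,\<delta>)" by (cases N)
  have det: "\<alpha>*\<delta> - \<beta>*\<gamma> = 1" using N N_def by simp
  have xy: "\<gamma> \<noteq> 0" "x = \<alpha>/\<gamma>" "\<delta> \<noteq> 0" "y = \<beta>/\<delta>"
    using top bot geod_tendsto_at_top_iff[OF det] geod_tendsto_at_bot_iff[OF det] N_def by auto
  obtain \<epsilon> ds where "\<epsilon> \<in> {-1, 1}" and ds: "set ds \<subseteq> lehner_digits" "ds \<noteq> []"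
    and "mat_det (word_mat ds) = 1" and lx: "(\<lambda>n. \<epsilon> * lconv (cycle ds) n) \<longlonglongrightarrow> x"
    and ly: "(\<lambda>n. - \<epsilon> * fconv (dual_cycle ds) n) \<longlonglongrightarrow> y"
    using \<open>lehner_coded x y\<close> unfolding lehner_coded_iff by blast
  have "\<epsilon> * \<epsilon> = 1" using \<open>\<epsilon> \<in> {-1, 1}\<close> by auto
  from tendsto_mult_left[OF lx, of \<epsilon>] tendsto_mult_left[OF ly, of "-\<epsilon>"]
  have lx': "lconv (cycle ds) \<longlonglongrightarrow> \<epsilon> * x" and ly': "fconv (dual_cycle ds) \<longlonglongrightarrow> - \<epsilon> * y"
    by (simp_all add: mult.assoc[symmetric] \<open>\<epsilon> * \<epsilon> = 1\<close>)
  obtain p q s t where W: "word_mat ds = (p,q,s,t)" by (cases "word_mat ds")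
  note X = lconv_cycle_limit_fixed_point[OF ds(1,2) W lx']
  note U = fconv_dual_cycle_limit_fixed_point[OF ds(1,2) W ly'
      S_set_sign_bound[OF \<open>(x, y) \<in> S_set\<close> \<open>\<epsilon> \<in> {-1, 1}\<close> X(1)]]
  txt \<open>The word matrix twisted by the sign, \<open>(p, \<epsilon> q, \<epsilon> s, t)\<close>, has \<open>x\<close> and \<open>y\<close> as fixed points
    and is therefore diagonalised by \<open>N\<close>.\<close>
  define e :: int where "e = (if \<epsilon> = 1 then 1 else -1)"
  have e: "of_int e = \<epsilon>" "e * e = 1" using \<open>\<epsilon> \<in> {-1, 1}\<close> by (auto simp: e_def)
  define V where "V = (p, e * q, e * s, t)"
  have "p * t - q * s = 1" using \<open>mat_det (word_mat ds) = 1\<close> W by simp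
  then have V: "mat_det V = 1" using e(2) by (simp add: V_def algebra_simps)
  have "s \<noteq> 0" using word_mat_entries_ge[OF ds W] by simp
  then have "e * s \<noteq> 0" using e(2) by auto
  have "of_int p * x + of_int (e * q) = x * (of_int (e * s) * x + of_int t)"
    "of_int p * y + of_int (e * q) = y * (of_int (e * s) * y + of_int t)"
    using X(2) U e(1) \<open>\<epsilon> * \<epsilon> = 1\<close> by (simp_all add: algebra_simps) algebra+
  then have VN: "mat_mult (of_int_mat V) N = mat_mult N (of_int (e * s) * x + of_int t, 0, 0, of_int (e * s) * y + of_int t)"
    unfolding V_def N_def xy(2,4) using mat_mult_eigen_columns xy(1,3) by simp
  moreover have "(of_int (e * s) * x + of_int t) * (of_int (e * s) * y + of_int t) = 1"
    using arg_cong[OF VN, of mat_det] N V by (simp add: mat_det_mult)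
  ultimately show ?thesis using closed_geod_of_diag_conj[OF N V V_def \<open>e * s \<noteq> 0\<close>] by blast
qed

lemma coded_lift_imp_closed_geod:
  assumes H: "mat_det H = 1" and "g \<in> SL2Z"
    and "((\<lambda>t. moeb (of_int_mat g) (geod H t)) \<longlongrightarrow> of_real x) at_top"
    and "((\<lambda>t. moeb (of_int_mat g) (geod H t)) \<longlongrightarrow> of_real y) at_bot"
    and "(x, y) \<in> S_set" "lehner_coded x y"
  shows "closed_on_M (geod H)"
proof -
  have g: "mat_det g = 1" using \<open>g \<in> SL2Z\<close> by (simp add: SL2Z_iff_det)
  have lift: "(\<lambda>t. moeb (of_int_mat g) (geod H t)) = geod (mat_mult (of_int_mat g) H)"
    using moeb_geod[OF H g] by simp
  have "mat_det (mat_mult (of_int_mat g) H) = 1" using g H by (simp add: mat_det_mult)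
  then have "closed_on_M (\<lambda>t. moeb (of_int_mat g) (geod H t))"
    using coded_endpoints_closed_geod assms(3-6) unfolding lift by blast
  then show ?thesis using closed_on_M_of_moeb \<open>g \<in> SL2Z\<close> Im_moeb_pos H by simp
qed

theorem proposition6p7:
  fixes \<gamma> :: "real \<Rightarrow> complex"
  assumes "is_geodesic \<gamma>"
  shows "closed_on_M \<gamma> \<longleftrightarrow>
    (\<exists>g\<in>SL2Z. \<exists>x y.
       ((\<lambda>t. moeb (of_int_mat g) (\<gamma> t)) \<longlongrightarrow> complex_of_real x) at_top \<and>
       ((\<lambda>t. moeb (of_int_mat g) (\<gamma> t)) \<longlongrightarrow> complex_of_real y) at_bot \<and>
       (x, y) \<in> S_set \<and>
       (\<exists>(\<epsilon>::real) (r::nat) (ds::(int \<times> int) list).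
          \<epsilon> \<in> {-1, 1} \<and> r \<ge> 1 \<and> length ds = r \<and>
          set ds \<subseteq> {(2, -1), (1, 1)} \<and>
          (\<Prod>i<r. - snd (ds ! i)) = 1 \<and>
          (\<lambda>n. \<epsilon> * lconv (\<lambda>i. ds ! (i mod r)) n) \<longlonglongrightarrow> x \<and>
          (\<lambda>n. - \<epsilon> * fconv (\<lambda>j. (snd (ds ! (r - 1 - j mod r)), fst (ds ! (r - 1 - j mod r)))) n)
             \<longlonglongrightarrow> y))"
proof -
  obtain H where H: "mat_det H = 1" and \<gamma>: "\<gamma> = geod H"
    using assms unfolding is_geodesic_def by fastforce
  show ?thesis unfolding lehner_coded_def[symmetric] \<gamma>
    using closed_geod_coded_lift[OF H] coded_lift_imp_closed_geod[OF H] by blast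
qed

end
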